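(* Let $C^{d,d_2}_{\varepsilon_2}(\lambda,\mathbf k)$ and $\phi_{\varepsilon_2}(\mathbf k)$ ($\mathbf k\in\mathbb Z^{r_2}_{++}$, $k_{r_2+1}=0$) be as below. (1) Let $\varepsilon_2=1$, $r_2=2$. The zero set of $(\lambda)_{\phi_1(\mathbf k),d}C_1^{d,d_2}(\lambda,\mathbf k)$ is contained in $[\frac{d-d_2}2-(k_1+k_2)+1,\frac{d-d_2}2-k_1]$ if $k_2>0$ and is empty if $k_2=0$. (2) Let $\varepsilon_2=1$, $d_2=d/2$. If $2\le m_1\le m_2\le r_2$, $k_2=\dots=k_{m_1}$ and $k_{m_2+1}=0$, the zero set of $(\lambda)_{\phi_1(\mathbf k),d}C_1^{d,d_2}(\lambda,\mathbf k)$ is contained in $[\frac d4(m_1-1)-(k_1+k_2)+1,\frac d4(2m_2-3)-k_{m_2-1}]$ if $k_1>k_2>0$, in $[\frac d4(2\lceil m_1/2\rceil-1)-(k_1+k_2)+1,\frac d4(2m_2-3)-k_{m_2-1}]$ if $k_1=k_2>0$, and is empty if $k_2=0$. (3) Let $\varepsilon_2=2$. If $1\le m_1,m_2,m_3\le r_2$, $m_1,m_2\le m_3$, $k_1-k_{m_1}\le1$, $k_a=1$ for $m_2+1\le a\le m_3$ and $k_{m_3+1}=0$, the zero set of $(\lambda)_{\phi_2(\mathbf k),d}C_2^{d,d_2}(\lambda,\mathbf k)$ is contained in $[\frac d2m_1-k_1+\frac32,\frac d2(m_2+m_3-1)-\frac{k_{m_2}}2+\frac12]$ if $k_1\ge2$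 and $m_2<m_3$, in $[\frac d2m_1-k_1+\frac32,\frac d2(2m_3-1)-\lceil\frac{k_{m_3}}2\rceil+\frac12]$ if $k_1\ge2$ and $m_2=m_3$, and is empty if $k_1\le1$. Moreover, for $m=1,\dots,\varepsilon_2r_2-1$, if $\phi_{\varepsilon_2}(\mathbf k)_{m+1}=0$ and $\phi_{\varepsilon_2}(\mathbf k)_m\ne0$, then $C^{d,d_2}_{\varepsilon_2}(\lambda,\mathbf k)$ is holomorphic and non-zero at $\lambda=\frac d2m$ and has a pole at $\lambda=\frac d2(m-1)$.
   Context: $d>0$, $d_2>0$ real, $r_2\ge1$ integer, $\mathbb Z^s_{++}=\{m_1\ge\dots\ge m_s\ge0\}$, $(a)_m=a(a+1)\cdots(a+m-1)$, $(\lambda)_{\mathbf m,d}=\prod_j(\lambda-\frac d2(j-1))_{m_j}$, $|\mathbf k|=\sum_ik_i$, $k_{r_2+1}:=0$. $C_1^{d,d_2}(\lambda,\mathbf k)=\frac{(\lambda+k_1-\frac{d-d_2}2)_{k_2}}{(\lambda)_{k_1+k_2}(\lambda-\frac d2)_{k_2}}$ when $r_2=2$ (case (1)); $C_1^{d,d/2}(\lambda,\mathbf k)=\frac{\prod_{1\le i<j\le r_2}(\lambda-\frac d4(i+j-2))_{k_i+k_j}}{\prod_{1\le i<j\le r_2+1}(\lambda-\frac d4(i+j-3))_{k_i+k_j}}$ (case (2)); $C_2^{d,d_2}(\lambda,\mathbf k)=\frac{2^{|\mathbf k|}\prod_{1\le i<j\le r_2}(2\lambda-1-d(i+j-1))_{k_i+k_j}}{\prod_{1\le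 i<j\le r_2+1}(2\lambda-1-d(i+j-2))_{k_i+k_j}}\frac{\prod_{i=1}^{r_2}(\lambda-\frac12-\frac d2(2i-1))_{k_i}}{\prod_{i=1}^{r_2}(\lambda-d(i-1))_{k_i}}$ (case (3)). $\phi_1(\mathbf k)_a=\min\{k_i+k_j:1\le i<j\le r_2+1,i+j=2a+1\}$ ($1\le a\le r_2$), $\phi_2(\mathbf k)_a=\min\{\lfloor\frac{k_i+k_j}2\rfloor:1\le i\le j\le r_2+1,i+j=a+1\}$ ($1\le a\le2r_2$); in the last claim, in case $\varepsilon_2=1$ the formula used is that of case (1) or (2), and $\phi_{\varepsilon_2}(\mathbf k)_{\varepsilon_2r_2+1}:=0$. The products $(\lambda)_{\phi_{\varepsilon_2}(\mathbf k),d}C^{d,d_2}_{\varepsilon_2}(\lambda,\mathbf k)$ are entire in $\lambda$. *)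

theory Defs
  imports Complex_Main "HOL-Computational_Algebra.Polynomial"
begin

text \<open>A partition-like multi-index k in Z^{r2}_{++} is a nonincreasing list of naturals of
length r2; entry k_i (1-based) is kx ks i, and k_i = 0 for i > r2 (so k_{r2+1} = 0).\<close>

definition kx :: "nat list \<Rightarrow> nat \<Rightarrow> nat" where
  "kx ks i = (if 1 \<le> i \<and> i \<le> length ks then ks ! (i - 1) else 0)"

definition lpoch :: "complex \<Rightarrow> complex \<Rightarrow> nat \<Rightarrow> complex poly" where
  "lpoch a b m = (\<Prod>t<m. [: b + of_nat t, a :])"

text \<open>Generalized Pochhammer (lambda)_{m,d} = prod_{j=1}^s (lambda - d/2 (j-1))_{m_j}.\<close>
definition gpoch :: "real \<Rightarrow> nat \<Rightarrow> (nat \<Rightarrow> nat) \<Rightarrow> complex poly" where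
  "gpoch d s mv = (\<Prod>j\<in>{1..s}. lpoch 1 (- complex_of_real (d / 2 * (real j - 1))) (mv j))"

definition phi1 :: "nat list \<Rightarrow> nat \<Rightarrow> nat" where
  "phi1 ks a = (if 1 \<le> a \<and> a \<le> length ks then
     Min {kx ks i + kx ks j | i j. 1 \<le> i \<and> i < j \<and> j \<le> length ks + 1 \<and> i + j = 2 * a + 1}
   else 0)"

definition phi2 :: "nat list \<Rightarrow> nat \<Rightarrow> nat" where
  "phi2 ks a = (if 1 \<le> a \<and> a \<le> 2 * length ks then
     Min {(kx ks i + kx ks j) div 2 | i j. 1 \<le> i \<and> i \<le> j \<and> j \<le> length ks + 1 \<and> i + j = a + 1}
   else 0)"

text \<open>Case (1), r2 = 2: numerator and denominator of C_1^{d,d2}.\<close>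
definition C1a_num :: "real \<Rightarrow> real \<Rightarrow> nat list \<Rightarrow> complex poly" where
  "C1a_num d d2 ks = lpoch 1 (complex_of_real (real (kx ks 1) - (d - d2) / 2)) (kx ks 2)"

definition C1a_den :: "real \<Rightarrow> nat list \<Rightarrow> complex poly" where
  "C1a_den d ks = lpoch 1 0 (kx ks 1 + kx ks 2) * lpoch 1 (- complex_of_real (d / 2)) (kx ks 2)"

definition C1b_num :: "real \<Rightarrow> nat list \<Rightarrow> complex poly" where
  "C1b_num d ks = (\<Prod>i\<in>{1..length ks}. \<Prod>j\<in>{i+1..length ks}.
      lpoch 1 (- complex_of_real (d / 4 * (real (i + j) - 2))) (kx ks i + kx ks j))"

definition C1b_den :: "real \<Rightarrow> nat list \<Rightarrow> complex poly" where
  "C1b_den d ks = (\<Prod>i\<in>{1..length ks + 1}. \<Prod>j\<in>{i+1..length ks + 1}.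
      lpoch 1 (- complex_of_real (d / 4 * (real (i + j) - 3))) (kx ks i + kx ks j))"

definition C2_num :: "real \<Rightarrow> nat list \<Rightarrow> complex poly" where
  "C2_num d ks = smult (2 ^ sum_list ks)
     ((\<Prod>i\<in>{1..length ks}. \<Prod>j\<in>{i+1..length ks}.
        lpoch 2 (- 1 - complex_of_real (d * (real (i + j) - 1))) (kx ks i + kx ks j))
      * (\<Prod>i\<in>{1..length ks}.
        lpoch 1 (- 1 / 2 - complex_of_real (d / 2 * (2 * real i - 1))) (kx ks i)))"

definition C2_den :: "real \<Rightarrow> nat list \<Rightarrow> complex poly" where
  "C2_den d ks =
     (\<Prod>i\<in>{1..length ks + 1}. \<Prod>j\<in>{i+1..length ks + 1}.
        lpoch 2 (- 1 - complex_of_real (d * (real (i + j) - 2))) (kx ks i + kx ks j))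
      * (\<Prod>i\<in>{1..length ks}. lpoch 1 (- complex_of_real (d * (real i - 1))) (kx ks i))"

text \<open>For a rational function N/D (N, D nonzero polynomials): its zero set (points of
positive net order), holomorphy-and-nonvanishing (net order 0), and poles (negative net order).\<close>
definition rat_zeros :: "complex poly \<Rightarrow> complex poly \<Rightarrow> complex set" where
  "rat_zeros N D = {z. order z D < order z N}"

definition rat_holo_nonzero_at :: "complex poly \<Rightarrow> complex poly \<Rightarrow> complex \<Rightarrow> bool" where
  "rat_holo_nonzero_at N D z \<longleftrightarrow> order z N = order z D"

definition rat_pole_at :: "complex poly \<Rightarrow> complex poly \<Rightarrow> complex \<Rightarrow> bool" where
  "rat_pole_at N D z \<longleftrightarrow> order z N < order z D"

end

theory Submission
  imports Defs
begin

text \<open>Every factor is a Pochhammer polynomial \<open>(a\<lambda> + b)\<^sub>m\<close>, whose order at \<open>z\<close> is \<open>1\<close> if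
\<open>-(az + b) \<in> {0, \<dots>, m - 1}\<close> and \<open>0\<close> otherwise, so every claim is a statement about counting
roots. Since \<open>k\<close> is nonincreasing, the numerator factor of a pair \<open>(i, j)\<close> has the same base point
as the denominator factor of the pair \<open>(i, j + 1)\<close> and at least as many roots; after cancelling,
it leaves an excess of \<open>k_j - k_(j+1)\<close> roots. The diagonal denominator factors \<open>(i, i + 1)\<close>
split into the factors of \<open>(\<lambda>)_(\<phi>(k),d)\<close> and a remainder. Hence \<open>z\<close> is a zero exactly when
the excess roots at \<open>z\<close> outnumber the remainder roots at \<open>z\<close>. The bounds locate the excess
roots; where the hypotheses allow one excess root outside the claimed interval, a remainder root
cancels it. In case (3) the diagonal factor \<open>(2\<lambda> + c)_(k_i + k_(i+1))\<close> is first split into its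
roots of even and of odd index: the former match a factor of the numerator, the latter a factor
of \<open>(\<lambda>)_(\<phi>(k),d)\<close>. Holomorphy at \<open>d/2 m\<close> and the pole at \<open>d/2 (m - 1)\<close> come from
evaluating the same decomposition at these two points.\<close>

definition nat_below :: "complex \<Rightarrow> nat \<Rightarrow> nat" where
  "nat_below w L = (if \<exists>t. t < L \<and> w = of_nat t then 1 else 0)"

lemma nat_below_le_1: "nat_below w L \<le> 1"
  by (simp add: nat_below_def)

lemma nat_below_0 [simp]: "nat_below w 0 = 0"
  by (simp add: nat_below_def)

lemma nat_below_nonzeroD: "nat_below w L \<noteq> 0 \<Longrightarrow> \<exists>t. t < L \<and> w = of_nat t"
  by (simp add: nat_below_def split: if_splits)

lemma nat_below_of_nat: "a < L \<Longrightarrow> nat_below (of_nat a) L = 1"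
  unfolding nat_below_def by auto

lemma nat_below_of_real_nonzeroD: "nat_below (complex_of_real y) L \<noteq> 0 \<Longrightarrow> \<exists>t. t < L \<and> y = real t"
proof -
  assume "nat_below (complex_of_real y) L \<noteq> 0"
  then obtain t where "t < L" "complex_of_real y = of_nat t" using nat_below_nonzeroD by blast
  moreover have "(of_nat t :: complex) = complex_of_real (real t)" by simp
  ultimately show ?thesis by (metis of_real_eq_iff)
qed

lemma nat_below_of_real: "y = real a \<Longrightarrow> a < L \<Longrightarrow> nat_below (complex_of_real y) L = 1"
  using nat_below_of_nat[of a L] by simp

lemma nat_below_add: "nat_below w (a + b) = nat_below w a + nat_below (w - of_nat a) b"
proof -
  have "(\<exists>t. t < a + b \<and> w = of_nat t) \<longleftrightarrow>
        (\<exists>t. t < a \<and> w = of_nat t) \<or> (\<exists>t. t < b \<and> w - of_nat a = of_nat t)"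
  proof
    assume "\<exists>t. t < a + b \<and> w = of_nat t"
    then obtain t where t: "t < a + b" "w = of_nat t" by blast
    show "(\<exists>t. t < a \<and> w = of_nat t) \<or> (\<exists>t. t < b \<and> w - of_nat a = of_nat t)"
    proof (cases "t < a")
      case False
      then have "t - a < b" "w - of_nat a = of_nat (t - a)" using t by (auto simp: of_nat_diff)
      then show ?thesis by blast
    qed (use t in blast)
  next
    assume "(\<exists>t. t < a \<and> w = of_nat t) \<or> (\<exists>t. t < b \<and> w - of_nat a = of_nat t)"
    then show "\<exists>t. t < a + b \<and> w = of_nat t"
    proof
      assume "\<exists>t. t < b \<and> w - of_nat a = of_nat t"
      then obtain t where "t < b" "w - of_nat a = of_nat t" by blast
      then have "a + t < a + b" "w = of_nat (a + t)" by (auto simp: algebra_simps)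
      then show ?thesis by blast
    qed auto
  qed
  moreover have "\<not> ((\<exists>t. t < a \<and> w = of_nat t) \<and> (\<exists>t. t < b \<and> w - of_nat a = of_nat t))"
  proof
    assume "(\<exists>t. t < a \<and> w = of_nat t) \<and> (\<exists>t. t < b \<and> w - of_nat a = of_nat t)"
    then obtain t t' where "t < a" "w = of_nat t" "w - of_nat a = of_nat t'" by blast
    then have "(of_nat t :: complex) = of_nat (a + t')" by (simp add: algebra_simps)
    then have "t = a + t'" using of_nat_eq_iff by blast
    with \<open>t < a\<close> show False by simp
  qed
  ultimately show ?thesis unfolding nat_below_def by auto
qed

lemma nat_below_split: "a \<le> L \<Longrightarrow> nat_below w L = nat_below w a + nat_below (w - of_nat a) (L - a)"
  using nat_below_add[of w a "L - a"] by simp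

lemma nat_below_even_odd:
  "nat_below w L = nat_below (w / 2) ((L + 1) div 2) + nat_below ((w - 1) / 2) (L div 2)"
proof -
  have "(\<exists>t. t < L \<and> w = of_nat t) \<longleftrightarrow>
        (\<exists>t. t < (L + 1) div 2 \<and> w / 2 = of_nat t) \<or> (\<exists>t. t < L div 2 \<and> (w - 1) / 2 = of_nat t)"
  proof
    assume "\<exists>t. t < L \<and> w = of_nat t"
    then obtain t where t: "t < L" "w = of_nat t" by blast
    show "(\<exists>t. t < (L + 1) div 2 \<and> w / 2 = of_nat t) \<or> (\<exists>t. t < L div 2 \<and> (w - 1) / 2 = of_nat t)"
    proof (cases "even t")
      case True
      then obtain r where "t = 2 * r" by blast
      then have "r < (L + 1) div 2" "w / 2 = of_nat r" using t by auto
      then show ?thesis by blast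
    next
      case False
      then obtain r where "t = 2 * r + 1" using oddE by blast
      then have "r < L div 2" "(w - 1) / 2 = of_nat r" using t by auto
      then show ?thesis by blast
    qed
  next
    assume "(\<exists>t. t < (L + 1) div 2 \<and> w / 2 = of_nat t) \<or> (\<exists>t. t < L div 2 \<and> (w - 1) / 2 = of_nat t)"
    then show "\<exists>t. t < L \<and> w = of_nat t"
    proof
      assume "\<exists>t. t < (L + 1) div 2 \<and> w / 2 = of_nat t"
      then obtain r where "r < (L + 1) div 2" "w / 2 = of_nat r" by blast
      then have "2 * r < L" "w = of_nat (2 * r)" by auto
      then show ?thesis by blast
    next
      assume "\<exists>t. t < L div 2 \<and> (w - 1) / 2 = of_nat t"
      then obtain r where "r < L div 2" "(w - 1) / 2 = of_nat r" by blast
      then have "2 * r + 1 < L" "w = of_nat (2 * r + 1)" by (auto simp: field_simps)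
      then show ?thesis by blast
    qed
  qed
  moreover have "\<not> ((\<exists>t. t < (L + 1) div 2 \<and> w / 2 = of_nat t) \<and> (\<exists>t. t < L div 2 \<and> (w - 1) / 2
      = of_nat t))"
  proof
    assume "(\<exists>t. t < (L + 1) div 2 \<and> w / 2 = of_nat t) \<and> (\<exists>t. t < L div 2 \<and> (w - 1) / 2 = of_nat t)"
    then obtain r r' where "w / 2 = of_nat r" "(w - 1) / 2 = of_nat r'" by blast
    then have "(of_nat (2 * r) :: complex) = of_nat (2 * r' + 1)" by (auto simp: field_simps)
    then have "2 * r = 2 * r' + 1" using of_nat_eq_iff by blast
    then show False by presburger
  qed
  ultimately show ?thesis unfolding nat_below_def by auto
qed

lemma order_linear:
  fixes a c z :: "'a :: idom"
  assumes "a \<noteq> 0"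
  shows "order z [:c, a:] = (if a * z + c = 0 then 1 else 0)"
proof -
  have nz: "[:c, a:] \<noteq> 0" using assms by simp
  have le: "order z [:c, a:] \<le> 1" using order_degree[OF nz] assms by simp
  have p: "poly [:c, a:] z = a * z + c" by (simp add: algebra_simps)
  show ?thesis
  proof (cases "a * z + c = 0")
    case True
    then have "order z [:c, a:] \<noteq> 0" using order_root[of "[:c, a:]" z] nz p by auto
    then show ?thesis using True le by simp
  next
    case False
    then show ?thesis using order_0I[of "[:c, a:]" z] p by (simp add: algebra_simps)
  qed
qed

lemma order_prod:
  fixes f :: "'b \<Rightarrow> 'a :: idom poly"
  assumes "finite A" "\<And>x. x \<in> A \<Longrightarrow> f x \<noteq> 0"
  shows "order z (\<Prod>x\<in>A. f x) = (\<Sum>x\<in>A. order z (f x))"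
  using assms
proof (induction A rule: finite_induct)
  case (insert x F)
  have "f x * (\<Prod>x\<in>F. f x) \<noteq> 0" using insert by (simp add: prod_zero_iff)
  then show ?case using insert by (simp add: order_mult)
qed simp

lemma lpoch_nonzero: "a \<noteq> 0 \<Longrightarrow> lpoch a b m \<noteq> 0"
  unfolding lpoch_def by (simp add: prod_zero_iff)

lemma order_lpoch:
  assumes "a \<noteq> 0"
  shows "order z (lpoch a b m) = nat_below (- (a * z + b)) m"
proof -
  have "order z (lpoch a b m) = (\<Sum>t<m. if a * z + b + of_nat t = 0 then 1 else 0)"
    unfolding lpoch_def using assms by (subst order_prod) (auto simp: order_linear add.assoc)
  also have "\<dots> = card {t. t < m \<and> a * z + b + of_nat t = 0}"
    by (simp add: sum.If_cases Int_def)
  also have "\<dots> = nat_below (- (a * z + b)) m"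
  proof -
    have "a * z + b + of_nat t = 0 \<longleftrightarrow> - (a * z + b) = of_nat t" for t
      by (metis add.commute add_eq_0_iff2 minus_equation_iff)
    then have "{t. t < m \<and> a * z + b + of_nat t = 0} = {t. t < m \<and> - (a * z + b) = of_nat t}"
      by simp
    moreover have "card {t. t < m \<and> (w :: complex) = of_nat t} = nat_below w m" for w
    proof (cases "\<exists>t. t < m \<and> w = of_nat t")
      case True
      then obtain t where t: "t < m" "w = of_nat t" by blast
      then have "{t. t < m \<and> w = of_nat t} = {t}" by auto
      then show ?thesis using True by (simp add: nat_below_def)
    qed (auto simp: nat_below_def)
    ultimately show ?thesis by simp
  qed
  finally show ?thesis .
qed

lemma order_double_prod:
  assumes "a \<noteq> 0"
  shows "order z (\<Prod>i\<in>{1..n::nat}. \<Prod>j\<in>{i+1..m::nat}. lpoch a (b i j) (L i j)) =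
         (\<Sum>i\<in>{1..n}. \<Sum>j\<in>{i+1..m}. nat_below (- (a * z + b i j)) (L i j))"
proof -
  have "order z (\<Prod>i\<in>{1..n}. \<Prod>j\<in>{i+1..m}. lpoch a (b i j) (L i j)) =
        (\<Sum>i\<in>{1..n}. \<Sum>j\<in>{i+1..m}. order z (lpoch a (b i j) (L i j)))"
    using assms by (subst order_prod) (auto simp: prod_zero_iff lpoch_nonzero intro!: sum.cong
        order_prod)
  then show ?thesis using assms by (simp add: order_lpoch)
qed

lemma double_sum_le_single:
  fixes f :: "nat \<Rightarrow> nat \<Rightarrow> nat"
  assumes "\<And>i j. i \<in> {1..n} \<Longrightarrow> j \<in> {i+1..m} \<Longrightarrow> f i j \<noteq> 0 \<Longrightarrow> i = i0 \<and> j = j0"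
  shows "(\<Sum>i\<in>{1..n}. \<Sum>j\<in>{i+1..m}. f i j) \<le> f i0 j0"
proof -
  have "(\<Sum>i\<in>{1..n}. \<Sum>j\<in>{i+1..m}. f i j) \<le> (\<Sum>i\<in>{1..n}. if i = i0 then f i0 j0 else 0)"
  proof (rule sum_mono)
    fix i assume i: "i \<in> {1..n}"
    show "(\<Sum>j\<in>{i+1..m}. f i j) \<le> (if i = i0 then f i0 j0 else 0)"
    proof (cases "i = i0")
      case True
      have "(\<Sum>j\<in>{i+1..m}. f i j) = (\<Sum>j\<in>{i+1..m}. if j = j0 then f i0 j0 else 0)"
        using assms i True by (intro sum.cong refl) metis
      then show ?thesis using True by (simp add: sum.delta)
    next
      case False
      then have "(\<Sum>j\<in>{i+1..m}. f i j) = 0" using assms i by (intro sum.neutral) blast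
      then show ?thesis by simp
    qed
  qed
  also have "\<dots> \<le> f i0 j0" by (simp add: sum.delta)
  finally show ?thesis .
qed

lemma double_sum_nonzeroE:
  fixes f :: "nat \<Rightarrow> nat \<Rightarrow> nat"
  assumes "(\<Sum>i\<in>{1..n}. \<Sum>j\<in>{i+1..m}. f i j) \<noteq> 0"
  obtains i j where "i \<in> {1..n}" "j \<in> {i+1..m}" "f i j \<noteq> 0"
proof -
  have "\<exists>i\<in>{1..n}. (\<Sum>j\<in>{i+1..m}. f i j) \<noteq> 0" using assms by (meson sum.neutral)
  then show ?thesis using that by (meson sum.neutral)
qed

lemma sum_eq_single:
  assumes "finite S" "\<And>i. i \<in> S \<Longrightarrow> f i \<noteq> 0 \<Longrightarrow> i = i0"
  shows "sum f S = (if i0 \<in> S then f i0 else (0::nat))"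
proof -
  have "sum f S = (\<Sum>i\<in>S. if i = i0 then f i0 else 0)"
    using assms(2) by (intro sum.cong refl) (metis)
  then show ?thesis using assms(1) by (simp add: sum.delta)
qed

lemma sum_atLeastAtMost_pairs: "(\<Sum>a\<in>{1..2*n}. f a) = (\<Sum>i\<in>{1..n::nat}. f (2*i - 1) + f (2*i))"
proof (induction n)
  case (Suc n)
  have "{1..2 * Suc n} = insert (2*n+2) (insert (2*n+1) {1..2*n})" by auto
  then show ?case using Suc by (simp add: add_ac)
qed simp

lemma of_real_ceiling_half: "real_of_int \<lceil>real n / 2\<rceil> = real ((n + 1) div 2)"
proof -
  have "\<lceil>real n / 2\<rceil> = int ((n + 1) div 2)"
  proof (cases "even n")
    case True
    then obtain b where "n = 2 * b" by blast
    then show ?thesis by simp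
  next
    case False
    then obtain b where b: "n = 2 * b + 1" using oddE by blast
    have "\<lceil>real (2 * b + 1) / 2\<rceil> = int b + 1" by (rule ceiling_unique) auto
    then show ?thesis using b by simp
  qed
  then show ?thesis by simp
qed

lemma kx_antimono:
  assumes "sorted_wrt (\<ge>) ks" "1 \<le> i" "i \<le> j"
  shows "kx ks j \<le> kx ks i"
proof (cases "j \<le> length ks \<and> i \<noteq> j")
  case True
  then have "i - 1 < j - 1" "j - 1 < length ks" using assms by auto
  then have "ks ! (j - 1) \<le> ks ! (i - 1)" using sorted_wrt_nth_less[OF assms(1)] by blast
  then show ?thesis using assms True by (simp add: kx_def)
qed (auto simp: kx_def)

lemma kx_drop_unique:
  assumes "sorted_wrt (\<ge>) ks" "1 \<le> j" "1 \<le> j'"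
    "kx ks j = K" "kx ks (j + 1) < K" "kx ks j' = K" "kx ks (j' + 1) < K"
  shows "j = j'"
proof (rule ccontr)
  assume "j \<noteq> j'"
  then consider "j + 1 \<le> j'" | "j' + 1 \<le> j" by linarith
  then show False
    using kx_antimono[OF assms(1), of "j + 1" j'] kx_antimono[OF assms(1), of "j' + 1" j] assms
    by cases auto
qed

lemma kx_threshold:
  assumes "sorted_wrt (\<ge>) ks" "1 \<le> c"
  obtains A where "A \<le> length ks" "\<And>i. 1 \<le> i \<Longrightarrow> c \<le> kx ks i \<longleftrightarrow> i \<le> A"
proof -
  define A where "A = (LEAST a. \<not> c \<le> kx ks (a + 1))"
  have ex: "\<not> c \<le> kx ks (length ks + 1)" using assms(2) by (simp add: kx_def)
  have A1: "\<not> c \<le> kx ks (A + 1)" unfolding A_def by (rule LeastI[of _ "length ks"]) (use ex in simp)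
  have "A \<le> length ks" unfolding A_def by (rule Least_le) (use ex in simp)
  moreover have "c \<le> kx ks i \<longleftrightarrow> i \<le> A" if i: "1 \<le> i" for i
  proof
    assume "c \<le> kx ks i"
    show "i \<le> A"
    proof (rule ccontr)
      assume "\<not> i \<le> A"
      then have "kx ks i \<le> kx ks (A + 1)" using kx_antimono[OF assms(1), of "A + 1" i] by simp
      then show False using A1 \<open>c \<le> kx ks i\<close> by simp
    qed
  next
    assume "i \<le> A"
    then have "i - 1 < A" using i by simp
    then have "c \<le> kx ks (i - 1 + 1)" unfolding A_def using not_less_Least by blast
    then show "c \<le> kx ks i" using i by simp
  qed
  ultimately show ?thesis using that by blast
qed

lemma finite_phi1_set:
  "finite {kx ks i + kx ks j | i j. 1 \<le> i \<and> i < j \<and> j \<le> length ks + 1 \<and> i + j = 2 * a + 1}"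
proof -
  have "{kx ks i + kx ks j | i j. 1 \<le> i \<and> i < j \<and> j \<le> length ks + 1 \<and> i + j = 2 * a + 1}
     \<subseteq> (\<lambda>(i, j). kx ks i + kx ks j) ` ({0..length ks + 1} \<times> {0..length ks + 1})" by force
  then show ?thesis by (rule finite_subset) auto
qed

lemma finite_phi2_set:
  "finite {(kx ks i + kx ks j) div 2 | i j. 1 \<le> i \<and> i \<le> j \<and> j \<le> length ks + 1 \<and> i + j = a + 1}"
proof -
  have "{(kx ks i + kx ks j) div 2 | i j. 1 \<le> i \<and> i \<le> j \<and> j \<le> length ks + 1 \<and> i + j = a + 1}
     \<subseteq> (\<lambda>(i, j). (kx ks i + kx ks j) div 2) ` ({0..length ks + 1} \<times> {0..length ks + 1})" by force
  then show ?thesis by (rule finite_subset) auto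
qed

lemma phi1_le:
  assumes "1 \<le> i" "i < j" "j \<le> length ks + 1" "i + j = 2 * a + 1"
  shows "phi1 ks a \<le> kx ks i + kx ks j"
proof -
  let ?S = "{kx ks i + kx ks j | i j. 1 \<le> i \<and> i < j \<and> j \<le> length ks + 1 \<and> i + j = 2 * a + 1}"
  have "phi1 ks a = Min ?S" unfolding phi1_def using assms by simp
  moreover have "kx ks i + kx ks j \<in> ?S" using assms by blast
  ultimately show ?thesis using Min_le[OF finite_phi1_set] by simp
qed

lemma phi1_attained:
  assumes "1 \<le> a" "a \<le> length ks"
  obtains i j where "1 \<le> i" "i < j" "j \<le> length ks + 1" "i + j = 2 * a + 1" "phi1 ks a = kx ks i
      + kx ks j"
proof -
  let ?S = "{kx ks i + kx ks j | i j. 1 \<le> i \<and> i < j \<and> j \<le> length ks + 1 \<and> i + j = 2 * a + 1}"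
  have "finite ?S" by (rule finite_phi1_set)
  moreover have "1 \<le> a" "a < a + 1" "a + 1 \<le> length ks + 1" "a + (a + 1) = 2 * a + 1" using assms
      by auto
  then have "?S \<noteq> {}" by blast
  ultimately have "Min ?S \<in> ?S" by (rule Min_in)
  moreover have "phi1 ks a = Min ?S" unfolding phi1_def using assms by simp
  ultimately show ?thesis using that by auto
qed

lemma phi2_le:
  assumes "1 \<le> i" "i \<le> j" "j \<le> length ks + 1" "i + j = a + 1" "1 \<le> a" "a \<le> 2 * length ks"
  shows "phi2 ks a \<le> (kx ks i + kx ks j) div 2"
proof -
  let ?S = "{(kx ks i + kx ks j) div 2 | i j. 1 \<le> i \<and> i \<le> j \<and> j \<le> length ks + 1 \<and> i + j = a + 1}"
  have "phi2 ks a = Min ?S" unfolding phi2_def using assms by simp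
  moreover have "(kx ks i + kx ks j) div 2 \<in> ?S" using assms by blast
  ultimately show ?thesis using Min_le[OF finite_phi2_set] by simp
qed

lemma phi2_attained:
  assumes "1 \<le> a" "a \<le> 2 * length ks"
  obtains i j where "1 \<le> i" "i \<le> j" "j \<le> length ks + 1" "i + j = a + 1"
    "phi2 ks a = (kx ks i + kx ks j) div 2"
proof -
  let ?S = "{(kx ks i + kx ks j) div 2 | i j. 1 \<le> i \<and> i \<le> j \<and> j \<le> length ks + 1 \<and> i + j = a + 1}"
  have "finite ?S" by (rule finite_phi2_set)
  moreover have "(a + 1) div 2 + (a + 1 - (a + 1) div 2) = a + 1" "1 \<le> (a + 1) div 2"
    "(a + 1) div 2 \<le> a + 1 - (a + 1) div 2" "a + 1 - (a + 1) div 2 \<le> length ks + 1"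
    using assms by presburger+
  then have "?S \<noteq> {}" by blast
  ultimately have "Min ?S \<in> ?S" by (rule Min_in)
  moreover have "phi2 ks a = Min ?S" unfolding phi2_def using assms by simp
  ultimately show ?thesis using that by auto
qed

definition gpoch_term :: "real \<Rightarrow> (nat \<Rightarrow> nat) \<Rightarrow> complex \<Rightarrow> nat \<Rightarrow> nat" where
  "gpoch_term d mv z a = nat_below (complex_of_real (d / 2 * (real a - 1)) - z) (mv a)"

lemma gpoch_nonzero: "gpoch d s mv \<noteq> 0"
  unfolding gpoch_def by (auto simp: prod_zero_iff lpoch_nonzero)

lemma order_gpoch: "order z (gpoch d s mv) = (\<Sum>a\<in>{1..s}. gpoch_term d mv z a)"
  unfolding gpoch_def gpoch_term_def by (subst order_prod) (auto simp: lpoch_nonzero order_lpoch)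

definition C1b_shared :: "real \<Rightarrow> nat list \<Rightarrow> complex \<Rightarrow> nat" where
  "C1b_shared d ks z = (\<Sum>i\<in>{1..length ks}. \<Sum>j\<in>{i+1..length ks}.
     nat_below (complex_of_real (d / 4 * (real (i + j) - 2)) - z) (kx ks i + kx ks (j + 1)))"

definition C1b_excess :: "real \<Rightarrow> nat list \<Rightarrow> complex \<Rightarrow> nat \<Rightarrow> nat \<Rightarrow> nat" where
  "C1b_excess d ks z i j = nat_below (complex_of_real (d / 4 * (real (i + j) - 2)) - z
     - of_nat (kx ks i + kx ks (j + 1))) (kx ks j - kx ks (j + 1))"

definition C1b_diag :: "real \<Rightarrow> nat list \<Rightarrow> complex \<Rightarrow> nat \<Rightarrow> nat" where
  "C1b_diag d ks z i = nat_below (complex_of_real (d / 2 * (real i - 1)) - z) (kx ks i + kx ks (i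
      + 1))"

definition C1b_diag_rest :: "real \<Rightarrow> nat list \<Rightarrow> complex \<Rightarrow> nat \<Rightarrow> nat" where
  "C1b_diag_rest d ks z i = nat_below (complex_of_real (d / 2 * (real i - 1)) - z
      - of_nat (phi1 ks i))
     (kx ks i + kx ks (i + 1) - phi1 ks i)"

lemma order_C1b_num:
  assumes "sorted_wrt (\<ge>) ks"
  shows "order z (C1b_num d ks) =
    C1b_shared d ks z + (\<Sum>i\<in>{1..length ks}. \<Sum>j\<in>{i+1..length ks}. C1b_excess d ks z i j)"
proof -
  have "order z (C1b_num d ks) = (\<Sum>i\<in>{1..length ks}. \<Sum>j\<in>{i+1..length ks}.
      nat_below (complex_of_real (d / 4 * (real (i + j) - 2)) - z) (kx ks i + kx ks j))"
    unfolding C1b_num_def by (subst order_double_prod) simp_all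
  also have "\<dots> = (\<Sum>i\<in>{1..length ks}. \<Sum>j\<in>{i+1..length ks}.
      nat_below (complex_of_real (d / 4 * (real (i + j) - 2)) - z) (kx ks i + kx ks (j + 1))
      + C1b_excess d ks z i j)"
  proof (intro sum.cong refl)
    fix i j assume "i \<in> {1..length ks}" "j \<in> {i+1..length ks}"
    then have le: "kx ks i + kx ks (j + 1) \<le> kx ks i + kx ks j"
        using kx_antimono[OF assms, of j "j + 1"] by auto
    show "nat_below (complex_of_real (d / 4 * (real (i + j) - 2)) - z) (kx ks i + kx ks j) =
        nat_below (complex_of_real (d / 4 * (real (i + j) - 2)) - z) (kx ks i + kx ks (j + 1))
        + C1b_excess d ks z i j"
      unfolding C1b_excess_def using nat_below_split[OF le] le by simp
  qed
  finally show ?thesis unfolding C1b_shared_def by (simp add: sum.distrib)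
qed

lemma order_C1b_den: "order z (C1b_den d ks) = (\<Sum>i\<in>{1..length ks}. C1b_diag d ks z i)
    + C1b_shared d ks z"
proof -
  let ?X = "\<lambda>i j. nat_below (complex_of_real (d / 4 * (real (i + j) - 3)) - z) (kx ks i + kx ks j)"
  have shared: "(\<Sum>i\<in>{1..length ks}. \<Sum>j\<in>{Suc i..length ks}. ?X i (Suc j)) = C1b_shared d ks z"
    unfolding C1b_shared_def
  proof (intro sum.cong refl)
    fix i j
    have e: "d / 4 * (real (i + Suc j) - 3) = d / 4 * (real (i + j) - 2)" by (simp add: field_simps)
    show "?X i (Suc j) = nat_below (complex_of_real (d / 4 * (real (i + j) - 2)) - z) (kx ks i
        + kx ks (j + 1))"
      by (simp only: e) (simp only: Suc_eq_plus1)
  qed simp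
  have "order z (C1b_den d ks) = (\<Sum>i\<in>{1..length ks}. \<Sum>j\<in>{Suc i..Suc (length ks)}. ?X i j)"
    unfolding C1b_den_def by (subst order_double_prod) simp_all
  also have "\<dots> = (\<Sum>i\<in>{1..length ks}. C1b_diag d ks z i + (\<Sum>j\<in>{Suc i..length ks}. ?X i (Suc j)))"
  proof (intro sum.cong refl)
    fix i assume "i \<in> {1..length ks}"
    then have "(\<Sum>j\<in>{Suc i..Suc (length ks)}. ?X i j) = ?X i (Suc i)
        + (\<Sum>j\<in>{Suc (Suc i)..Suc (length ks)}. ?X i j)"
      by (intro sum.atLeast_Suc_atMost) auto
    also have "(\<Sum>j\<in>{Suc (Suc i)..Suc (length ks)}. ?X i j) = (\<Sum>j\<in>{Suc i..length ks}. ?X i (Suc j))"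
      by (rule sum.shift_bounds_cl_Suc_ivl)
    also have "?X i (Suc i) = C1b_diag d ks z i"
    proof -
      have e: "d / 4 * (real (i + Suc i) - 3) = d / 2 * (real i - 1)" by (simp add: field_simps)
      show ?thesis unfolding C1b_diag_def by (simp only: e) (simp only: Suc_eq_plus1)
    qed
    finally show "(\<Sum>j\<in>{Suc i..Suc (length ks)}. ?X i j) =
        C1b_diag d ks z i + (\<Sum>j\<in>{Suc i..length ks}. ?X i (Suc j))" .
  qed
  finally show ?thesis using shared by (simp add: sum.distrib)
qed

lemma C1b_diag_split:
  assumes "1 \<le> i" "i \<le> length ks"
  shows "C1b_diag d ks z i = gpoch_term d (phi1 ks) z i + C1b_diag_rest d ks z i"
proof -
  have "phi1 ks i \<le> kx ks i + kx ks (i + 1)" by (rule phi1_le) (use assms in auto)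
  then show ?thesis unfolding C1b_diag_def gpoch_term_def C1b_diag_rest_def
      by (rule nat_below_split)
qed

lemma order_C1b_balance:
  assumes "sorted_wrt (\<ge>) ks"
  shows "order z (gpoch d (length ks) (phi1 ks) * C1b_num d ks)
      + (\<Sum>i\<in>{1..length ks}. C1b_diag_rest d ks z i)
       = order z (C1b_den d ks) + (\<Sum>i\<in>{1..length ks}. \<Sum>j\<in>{i+1..length ks}. C1b_excess d ks z i j)"
proof -
  have "gpoch d (length ks) (phi1 ks) * C1b_num d ks \<noteq> 0"
    using gpoch_nonzero unfolding C1b_num_def by (auto simp: prod_zero_iff lpoch_nonzero)
  moreover have "(\<Sum>i\<in>{1..length ks}. C1b_diag d ks z i) =
      (\<Sum>i\<in>{1..length ks}. gpoch_term d (phi1 ks) z i) + (\<Sum>i\<in>{1..length ks}. C1b_diag_rest d ks z i)"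
    by (simp add: C1b_diag_split sum.distrib[symmetric])
  ultimately show ?thesis using order_C1b_num[OF assms] order_C1b_den
      by (simp add: order_mult order_gpoch)
qed

lemma C1b_zero_rest_less:
  assumes "sorted_wrt (\<ge>) ks"
    and "z \<in> rat_zeros (gpoch d (length ks) (phi1 ks) * C1b_num d ks) (C1b_den d ks)"
  shows "(\<Sum>i\<in>{1..length ks}. C1b_diag_rest d ks z i) <
         (\<Sum>i\<in>{1..length ks}. \<Sum>j\<in>{i+1..length ks}. C1b_excess d ks z i j)"
  using order_C1b_balance[OF assms(1), of z d] assms(2) unfolding rat_zeros_def by simp

lemma C1b_zero_excessE:
  assumes "sorted_wrt (\<ge>) ks"
    and "z \<in> rat_zeros (gpoch d (length ks) (phi1 ks) * C1b_num d ks) (C1b_den d ks)"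
  obtains i j where "i \<in> {1..length ks}" "j \<in> {i+1..length ks}" "C1b_excess d ks z i j \<noteq> 0"
proof -
  have "(\<Sum>i\<in>{1..length ks}. \<Sum>j\<in>{i+1..length ks}. C1b_excess d ks z i j) \<noteq> 0"
    using C1b_zero_rest_less[OF assms] by linarith
  then show ?thesis using that by (rule double_sum_nonzeroE)
qed

text \<open>An excess root that is cancelled by a remainder root cannot account for a zero on its own.\<close>

lemma C1b_zero_other_excessE:
  assumes "sorted_wrt (\<ge>) ks"
    and "z \<in> rat_zeros (gpoch d (length ks) (phi1 ks) * C1b_num d ks) (C1b_den d ks)"
    and "C1b_excess d ks z i0 j0 \<le> (\<Sum>i\<in>{1..length ks}. C1b_diag_rest d ks z i)"
  obtains i j where "i \<in> {1..length ks}" "j \<in> {i+1..length ks}" "C1b_excess d ks z i j \<noteq> 0"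
    "\<not> (i = i0 \<and> j = j0)"
proof (rule ccontr)
  assume "\<not> thesis"
  then have "(\<Sum>i\<in>{1..length ks}. \<Sum>j\<in>{i+1..length ks}. C1b_excess d ks z i j)
      \<le> C1b_excess d ks z i0 j0"
    using that by (intro double_sum_le_single) blast
  then show False using C1b_zero_rest_less[OF assms(1,2)] assms(3) by simp
qed

lemma C1b_excess_nonzeroD:
  assumes "C1b_excess d ks z i j \<noteq> 0"
  obtains t where "t < kx ks j - kx ks (j + 1)"
    "z = complex_of_real (d / 4 * (real (i + j) - 2) - real (kx ks i + kx ks (j + 1)) - real t)"
proof -
  obtain t where t: "t < kx ks j - kx ks (j + 1)"
    "complex_of_real (d / 4 * (real (i + j) - 2)) - z - of_nat (kx ks i + kx ks (j + 1)) = of_nat t"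
    using nat_below_nonzeroD[OF assms[unfolded C1b_excess_def]] by blast
  then have "z = complex_of_real (d / 4 * (real (i + j) - 2)) - of_nat (kx ks i + kx ks (j + 1))
      - of_nat t"
    by (simp add: algebra_simps)
  then show ?thesis using that t(1) by simp
qed

lemma C1b_excess_nonzero_imp_drop:
  assumes "C1b_excess d ks z i j \<noteq> 0"
  shows "kx ks (j + 1) < kx ks j"
proof -
  obtain t where "t < kx ks j - kx ks (j + 1)" using C1b_excess_nonzeroD[OF assms] by blast
  then show ?thesis by simp
qed

lemma C1b_excess_location:
  assumes d: "d > 0" and s: "sorted_wrt (\<ge>) ks" and nz: "C1b_excess d ks z i j \<noteq> 0"
    and ij: "1 \<le> i" "i < j" and m2: "2 \<le> m2" "kx ks (m2 + 1) = 0"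
  shows "z \<in> complex_of_real ` {d / 4 * (real (i + j) - 2) - real (kx ks i + kx ks j) + 1 ..
                                d / 4 * (2 * real m2 - 3) - real (kx ks (m2 - 1))}"
    and "j \<le> m2"
proof -
  obtain t where t: "t < kx ks j - kx ks (j + 1)"
    and z: "z = complex_of_real (d / 4 * (real (i + j) - 2) - real (kx ks i + kx ks (j + 1))
        - real t)"
    using C1b_excess_nonzeroD[OF nz] by blast
  show jm: "j \<le> m2"
  proof (rule ccontr)
    assume "\<not> j \<le> m2"
    then have "kx ks j \<le> kx ks (m2 + 1)" using kx_antimono[OF s, of "m2 + 1" j] by simp
    then show False using t m2 by simp
  qed
  define x where "x = d / 4 * (real (i + j) - 2) - real (kx ks i + kx ks (j + 1)) - real t"
  have "kx ks (m2 - 1) \<le> kx ks i" using kx_antimono[OF s, of i "m2 - 1"] ij jm by simp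
  moreover have "d / 4 * (real (i + j) - 2) \<le> d / 4 * (2 * real m2 - 3)"
    using d ij jm by (intro mult_left_mono) auto
  ultimately have "x \<le> d / 4 * (2 * real m2 - 3) - real (kx ks (m2 - 1))" unfolding x_def by simp
  moreover have "d / 4 * (real (i + j) - 2) - real (kx ks i + kx ks j) + 1 \<le> x"
    unfolding x_def using t by simp
  ultimately show "z \<in> complex_of_real ` {d / 4 * (real (i + j) - 2) - real (kx ks i + kx ks j) + 1 ..
      d / 4 * (2 * real m2 - 3) - real (kx ks (m2 - 1))}"
    unfolding z x_def[symmetric] by (intro imageI) simp
qed

lemma C1b_excess_index_ge:
  assumes "\<forall>a. 2 \<le> a \<and> a \<le> m1 \<longrightarrow> kx ks a = kx ks 2"
    and "C1b_excess d ks z i j \<noteq> 0" "1 \<le> i" "i < j"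
  shows "m1 \<le> j"
proof (rule ccontr)
  assume "\<not> m1 \<le> j"
  then have "2 \<le> j" "j \<le> m1" "2 \<le> j + 1" "j + 1 \<le> m1" using assms(3,4) by auto
  then have "kx ks j = kx ks 2" "kx ks (j + 1) = kx ks 2" using assms(1) by blast+
  then show False using C1b_excess_nonzero_imp_drop[OF assms(2)] by simp
qed

lemma C1b_zero_location:
  assumes d: "d > 0" and s: "sorted_wrt (\<ge>) ks" and m2: "2 \<le> m2" "kx ks (m2 + 1) = 0"
    and ij: "1 \<le> i" "i < j" and nz: "C1b_excess d ks z i j \<noteq> 0"
    and lb: "c \<le> d / 4 * (real (i + j) - 2)"
  shows "z \<in> complex_of_real `
    {c - real (kx ks 1 + kx ks 2) + 1 .. d / 4 * (2 * real m2 - 3) - real (kx ks (m2 - 1))}"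
proof -
  have "kx ks i \<le> kx ks 1" "kx ks j \<le> kx ks 2"
    using kx_antimono[OF s, of 1 i] kx_antimono[OF s, of 2 j] ij by auto
  then have "{d / 4 * (real (i + j) - 2) - real (kx ks i + kx ks j) + 1 ..
        d / 4 * (2 * real m2 - 3) - real (kx ks (m2 - 1))}
      \<subseteq> {c - real (kx ks 1 + kx ks 2) + 1 .. d / 4 * (2 * real m2 - 3) - real (kx ks (m2 - 1))}"
    using lb by auto
  then show ?thesis using C1b_excess_location(1)[OF d s nz ij m2] by blast
qed

lemma C1b_zeros_strict:
  assumes d: "d > 0" and s: "sorted_wrt (\<ge>) ks" and m: "2 \<le> m1" "m1 \<le> m2"
    and eqk: "\<forall>a. 2 \<le> a \<and> a \<le> m1 \<longrightarrow> kx ks a = kx ks 2" and z0: "kx ks (m2 + 1) = 0"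
  shows "rat_zeros (gpoch d (length ks) (phi1 ks) * C1b_num d ks) (C1b_den d ks)
          \<subseteq> complex_of_real ` {d / 4 * (real m1 - 1) - real (kx ks 1 + kx ks 2) + 1 ..
                                  d / 4 * (2 * real m2 - 3) - real (kx ks (m2 - 1))}"
proof
  fix z assume "z \<in> rat_zeros (gpoch d (length ks) (phi1 ks) * C1b_num d ks) (C1b_den d ks)"
  then obtain i j where ij: "i \<in> {1..length ks}" "j \<in> {i+1..length ks}" "C1b_excess d ks z i j \<noteq> 0"
    using C1b_zero_excessE[OF s] by blast
  then have "m1 \<le> j" using C1b_excess_index_ge[OF eqk] by auto
  then have "d / 4 * (real m1 - 1) \<le> d / 4 * (real (i + j) - 2)" using d ij
      by (intro mult_left_mono) auto
  then show "z \<in> complex_of_real ` {d / 4 * (real m1 - 1) - real (kx ks 1 + kx ks 2) + 1 ..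
                                  d / 4 * (2 * real m2 - 3) - real (kx ks (m2 - 1))}"
    using C1b_zero_location[OF d s _ z0 _ _ ij(3)] ij m by auto
qed

text \<open>When \<open>k\<close> is constant on \<open>1..m\<^sub>1\<close> with \<open>m\<^sub>1\<close> odd, the excess root of the pair \<open>(1, m\<^sub>1)\<close> is
exactly a remainder root of the middle diagonal factor, which is what improves the lower bound.\<close>

lemma C1b_excess_eq_diag_rest:
  assumes s: "sorted_wrt (\<ge>) ks" and b: "m1 = 2 * b + 1" "1 \<le> b" "m1 \<le> length ks"
    and kk: "\<And>a. 1 \<le> a \<Longrightarrow> a \<le> m1 \<Longrightarrow> kx ks a = kx ks 1"
  shows "C1b_excess d ks z 1 m1 = C1b_diag_rest d ks z (b + 1)"
proof -
  have phi: "phi1 ks (b + 1) = kx ks 1 + kx ks (m1 + 1)"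
  proof (rule antisym)
    show "phi1 ks (b + 1) \<le> kx ks 1 + kx ks (m1 + 1)" by (rule phi1_le) (use b in auto)
    obtain i j where ij: "1 \<le> i" "i < j" "j \<le> length ks + 1" "i + j = 2 * (b + 1) + 1"
      and eq: "phi1 ks (b + 1) = kx ks i + kx ks j"
      using phi1_attained[of "b + 1" ks] b by auto
    show "kx ks 1 + kx ks (m1 + 1) \<le> phi1 ks (b + 1)"
    proof (cases "i = 1")
      case True
      then have "j = m1 + 1" using ij b by auto
      then show ?thesis using eq True by simp
    next
      case False
      then have r: "1 \<le> i" "i \<le> m1" "1 \<le> j" "j \<le> m1" using ij b by auto
      have "kx ks i = kx ks 1" "kx ks j = kx ks 1" using kk[OF r(1,2)] kk[OF r(3,4)] by auto
      moreover have "kx ks (m1 + 1) \<le> kx ks 1" using kx_antimono[OF s, of 1 "m1 + 1"] by simp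
      ultimately show ?thesis using eq by simp
    qed
  qed
  have e1: "d / 4 * (real (1 + m1) - 2) = d / 2 * (real (b + 1) - 1)" using b
      by (simp add: field_simps)
  have e2: "kx ks (b + 1) + kx ks (b + 1 + 1) - phi1 ks (b + 1) = kx ks m1 - kx ks (m1 + 1)"
  proof -
    have "kx ks (b + 1) = kx ks 1" "kx ks (b + 1 + 1) = kx ks 1" "kx ks m1 = kx ks 1"
      using kk[of "b + 1"] kk[of "b + 1 + 1"] kk[of m1] b by auto
    then show ?thesis using phi by simp
  qed
  show ?thesis unfolding C1b_excess_def C1b_diag_rest_def by (simp only: e1 e2) (simp only: phi)
qed

lemma C1b_zero_excess_far:
  assumes s: "sorted_wrt (\<ge>) ks" and m: "2 \<le> m1" "m1 \<le> length ks"
    and eqk: "\<forall>a. 2 \<le> a \<and> a \<le> m1 \<longrightarrow> kx ks a = kx ks 2" and h: "kx ks 1 = kx ks 2"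
    and zZ: "z \<in> rat_zeros (gpoch d (length ks) (phi1 ks) * C1b_num d ks) (C1b_den d ks)"
  shows "\<exists>i j. 1 \<le> i \<and> i < j \<and> C1b_excess d ks z i j \<noteq> 0 \<and> 2 * real ((m1 + 1) div 2) + 1 \<le> real (i
      + j)"
proof (cases "even m1")
  case True
  then obtain c where c: "m1 = 2 * c" by blast
  obtain i j where ij: "i \<in> {1..length ks}" "j \<in> {i+1..length ks}" "C1b_excess d ks z i j \<noteq> 0"
    using C1b_zero_excessE[OF s zZ] by blast
  then have "m1 \<le> j" using C1b_excess_index_ge[OF eqk] by auto
  then have "2 * real ((m1 + 1) div 2) + 1 \<le> real (i + j)" using c ij by simp
  moreover have "1 \<le> i" "i < j" using ij by auto
  ultimately show ?thesis using ij(3) by blast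
next
  case False
  then obtain b where b: "m1 = 2 * b + 1" using oddE by blast
  have kk: "kx ks a = kx ks 1" if "1 \<le> a" "a \<le> m1" for a
  proof (cases "a = 1")
    case False
    then have "2 \<le> a" "a \<le> m1" using that by auto
    then have "kx ks a = kx ks 2" using eqk by blast
    then show ?thesis using h by simp
  qed simp
  have "C1b_excess d ks z 1 m1 = C1b_diag_rest d ks z (b + 1)"
    by (rule C1b_excess_eq_diag_rest[OF s b _ _ kk]) (use b m in auto)
  also have "\<dots> \<le> (\<Sum>i\<in>{1..length ks}. C1b_diag_rest d ks z i)"
    by (rule member_le_sum) (use b m in auto)
  finally obtain i j where ij: "i \<in> {1..length ks}" "j \<in> {i+1..length ks}" "C1b_excess d ks z i j
      \<noteq> 0"
    "\<not> (i = 1 \<and> j = m1)"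
    using C1b_zero_other_excessE[OF s zZ] by blast
  then have "m1 \<le> j" using C1b_excess_index_ge[OF eqk] by auto
  then have "2 * real ((m1 + 1) div 2) + 1 \<le> real (i + j)" using b ij by auto
  moreover have "1 \<le> i" "i < j" using ij by auto
  ultimately show ?thesis using ij(3) by blast
qed

lemma C1b_zeros_equal:
  assumes d: "d > 0" and s: "sorted_wrt (\<ge>) ks" and m: "2 \<le> m1" "m1 \<le> m2" "m2 \<le> length ks"
    and eqk: "\<forall>a. 2 \<le> a \<and> a \<le> m1 \<longrightarrow> kx ks a = kx ks 2" and z0: "kx ks (m2 + 1) = 0"
    and h: "kx ks 1 = kx ks 2"
  shows "rat_zeros (gpoch d (length ks) (phi1 ks) * C1b_num d ks) (C1b_den d ks)
          \<subseteq> complex_of_real ` {d / 4 * (2 * real_of_int \<lceil>real m1 / 2\<rceil> - 1) - real (kx ks 1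
              + kx ks 2) + 1 ..
                                  d / 4 * (2 * real m2 - 3) - real (kx ks (m2 - 1))}"
proof
  fix z assume zZ: "z \<in> rat_zeros (gpoch d (length ks) (phi1 ks) * C1b_num d ks) (C1b_den d ks)"
  obtain i j where ij: "1 \<le> i" "i < j" "C1b_excess d ks z i j \<noteq> 0"
    and lb: "2 * real ((m1 + 1) div 2) + 1 \<le> real (i + j)"
    using C1b_zero_excess_far[OF s _ _ eqk h zZ] m by auto
  have "d / 4 * (2 * real_of_int \<lceil>real m1 / 2\<rceil> - 1) \<le> d / 4 * (real (i + j) - 2)"
    unfolding of_real_ceiling_half using d lb by (intro mult_left_mono) auto
  then show "z \<in> complex_of_real ` {d / 4 * (2 * real_of_int \<lceil>real m1 / 2\<rceil> - 1) - real (kx ks 1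
      + kx ks 2) + 1 ..
                                  d / 4 * (2 * real m2 - 3) - real (kx ks (m2 - 1))}"
    using C1b_zero_location[OF d s _ z0 ij] m by auto
qed

lemma C1b_zeros_empty:
  assumes s: "sorted_wrt (\<ge>) ks" and h: "kx ks 2 = 0"
  shows "rat_zeros (gpoch d (length ks) (phi1 ks) * C1b_num d ks) (C1b_den d ks) = {}"
proof -
  have "False" if zZ: "z \<in> rat_zeros (gpoch d (length ks) (phi1 ks) * C1b_num d ks) (C1b_den d
      ks)" for z
  proof -
    obtain i j where ij: "i \<in> {1..length ks}" "j \<in> {i+1..length ks}" "C1b_excess d ks z i j \<noteq> 0"
      using C1b_zero_excessE[OF s zZ] by blast
    then have "kx ks j = 0" using kx_antimono[OF s, of 2 j] h by auto
    then show False using C1b_excess_nonzero_imp_drop[OF ij(3)] by simp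
  qed
  then show ?thesis by blast
qed

lemma C1b_zeros:
  assumes d: "d > 0" and s: "sorted_wrt (\<ge>) ks" and m: "2 \<le> m1" "m1 \<le> m2" "m2 \<le> length ks"
    and eqk: "\<forall>a. 2 \<le> a \<and> a \<le> m1 \<longrightarrow> kx ks a = kx ks 2" and z0: "kx ks (m2 + 1) = 0"
  shows "(kx ks 1 > kx ks 2 \<and> kx ks 2 > 0 \<longrightarrow>
        rat_zeros (gpoch d (length ks) (phi1 ks) * C1b_num d ks) (C1b_den d ks)
          \<subseteq> complex_of_real ` {d / 4 * (real m1 - 1) - real (kx ks 1 + kx ks 2) + 1 ..
                                  d / 4 * (2 * real m2 - 3) - real (kx ks (m2 - 1))}) \<and>
      (kx ks 1 = kx ks 2 \<and> kx ks 2 > 0 \<longrightarrow>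
        rat_zeros (gpoch d (length ks) (phi1 ks) * C1b_num d ks) (C1b_den d ks)
          \<subseteq> complex_of_real ` {d / 4 * (2 * real_of_int \<lceil>real m1 / 2\<rceil> - 1) - real (kx ks 1
              + kx ks 2) + 1 ..
                                  d / 4 * (2 * real m2 - 3) - real (kx ks (m2 - 1))}) \<and>
      (kx ks 2 = 0 \<longrightarrow> rat_zeros (gpoch d (length ks) (phi1 ks) * C1b_num d ks) (C1b_den d ks) = {})"
  using C1b_zeros_strict[OF d s m(1,2) eqk z0] C1b_zeros_equal[OF d s m eqk z0] C1b_zeros_empty[OF
      s]
  by blast

lemma phi1_drop:
  assumes s: "sorted_wrt (\<ge>) ks" and m: "1 \<le> m" "m + 1 \<le> length ks"
    and "phi1 ks (m + 1) = 0" "phi1 ks m \<noteq> 0"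
  shows "kx ks (m + 1) = 0" "0 < kx ks m"
proof -
  obtain i j where ij: "1 \<le> i" "i < j" "j \<le> length ks + 1" "i + j = 2 * (m + 1) + 1"
    "phi1 ks (m + 1) = kx ks i + kx ks j"
    using phi1_attained[of "m + 1" ks] m by auto
  then show k0: "kx ks (m + 1) = 0" using kx_antimono[OF s, of i "m + 1"] assms by simp
  show "0 < kx ks m" using phi1_le[of m "m + 1" ks m] m k0 assms by (cases "kx ks m") auto
qed

lemma C1b_diag_location:
  assumes s: "sorted_wrt (\<ge>) ks" and "1 \<le> i" and nz: "C1b_diag d ks (complex_of_real y) i \<noteq> 0"
  shows "y \<le> d / 2 * (real i - 1)" "0 < kx ks i"
proof -
  obtain t where t: "t < kx ks i + kx ks (i + 1)" "complex_of_real (d / 2 * (real i - 1) - y)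
      = of_nat t"
    using nat_below_nonzeroD[OF nz[unfolded C1b_diag_def]] by auto
  then have "complex_of_real (d / 2 * (real i - 1) - y) = complex_of_real (real t)" by simp
  then have "d / 2 * (real i - 1) - y = real t" by (simp only: of_real_eq_iff)
  then show "y \<le> d / 2 * (real i - 1)" by simp
  show "0 < kx ks i" using t kx_antimono[OF s, of i "i + 1"] assms by simp
qed

lemma C1b_excess_vanish:
  assumes d: "d > 0" and s: "sorted_wrt (\<ge>) ks" and k: "kx ks (m + 1) = 0"
    and y: "d / 4 * (2 * real m - 3) < y"
  shows "(\<Sum>i\<in>{1..length ks}. \<Sum>j\<in>{i+1..length ks}. C1b_excess d ks (complex_of_real y) i j) = 0"
proof (intro sum.neutral ballI)
  fix i j assume ij: "i \<in> {1..length ks}" "j \<in> {i+1..length ks}"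
  show "C1b_excess d ks (complex_of_real y) i j = 0"
  proof (rule ccontr)
    assume nz: "C1b_excess d ks (complex_of_real y) i j \<noteq> 0"
    have "j \<le> m"
    proof (rule ccontr)
      assume "\<not> j \<le> m"
      then have "kx ks j \<le> kx ks (m + 1)" using kx_antimono[OF s, of "m + 1" j] by simp
      then show False using C1b_excess_nonzero_imp_drop[OF nz] k by simp
    qed
    then have "2 \<le> m" using ij by simp
    then show False using C1b_excess_location(1)[OF d s nz _ _ _ k] ij y by auto
  qed
qed

lemma C1b_diag_vanish:
  assumes d: "d > 0" and s: "sorted_wrt (\<ge>) ks" and k: "kx ks (m + 1) = 0"
    and y: "d / 2 * (real m - 1) < y" and i: "1 \<le> i"
  shows "C1b_diag d ks (complex_of_real y) i = 0"
proof (rule ccontr)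
  assume nz: "C1b_diag d ks (complex_of_real y) i \<noteq> 0"
  have "i \<le> m"
  proof (rule ccontr)
    assume "\<not> i \<le> m"
    then have "kx ks i \<le> kx ks (m + 1)" using kx_antimono[OF s, of "m + 1" i] by simp
    then show False using C1b_diag_location(2)[OF s i nz] k by simp
  qed
  then have "d / 2 * (real i - 1) \<le> d / 2 * (real m - 1)" using d by (intro mult_left_mono) auto
  then show False using C1b_diag_location(1)[OF s i nz] y by auto
qed

lemma C1b_holo_pole:
  assumes d: "d > 0" and s: "sorted_wrt (\<ge>) ks" and m: "1 \<le> m" "m \<le> length ks - 1"
    and phi: "phi1 ks (m + 1) = 0" "phi1 ks m \<noteq> 0"
  shows "rat_holo_nonzero_at (C1b_num d ks) (C1b_den d ks) (complex_of_real (d / 2 * real m)) \<and>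
         rat_pole_at (C1b_num d ks) (C1b_den d ks) (complex_of_real (d / 2 * (real m - 1)))"
proof -
  have m': "m + 1 \<le> length ks" using m by simp
  note k = phi1_drop[OF s m(1) m' phi]
  have lt: "d / 4 * (2 * real m - 3) < d / 2 * real m" "d / 4 * (2 * real m - 3) < d / 2 * (real m
      - 1)"
    "d / 2 * (real m - 1) < d / 2 * real m" using d by (simp_all add: field_simps)
  have "order (complex_of_real (d / 2 * real m)) (C1b_num d ks)
      = order (complex_of_real (d / 2 * real m)) (C1b_den d ks)"
    using order_C1b_num[OF s] order_C1b_den C1b_excess_vanish[OF d s k(1) lt(1)]
      C1b_diag_vanish[OF d s k(1) lt(3)] by simp
  moreover have "order (complex_of_real (d / 2 * (real m - 1))) (C1b_num d ks) <
                 order (complex_of_real (d / 2 * (real m - 1))) (C1b_den d ks)"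
  proof -
    have "C1b_diag d ks (complex_of_real (d / 2 * (real m - 1))) m = 1"
      unfolding C1b_diag_def nat_below_def using k by auto
    moreover have "C1b_diag d ks (complex_of_real (d / 2 * (real m - 1))) m \<le>
        (\<Sum>i\<in>{1..length ks}. C1b_diag d ks (complex_of_real (d / 2 * (real m - 1))) i)"
      by (rule member_le_sum) (use m m' in auto)
    ultimately show ?thesis using order_C1b_num[OF s] order_C1b_den C1b_excess_vanish[OF d s k(1)
        lt(2)] by simp
  qed
  ultimately show ?thesis unfolding rat_holo_nonzero_at_def rat_pole_at_def by simp
qed

lemma phi1_length_two:
  assumes "length ks = 2"
  shows "phi1 ks 1 = kx ks 1 + kx ks 2" "phi1 ks 2 = kx ks 2"
proof -
  obtain i j where "1 \<le> i" "i < j" "j \<le> length ks + 1" "i + j = 2 * 1 + 1" "phi1 ks 1 = kx ks i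
      + kx ks j"
    using phi1_attained[of 1 ks] assms by auto
  moreover from this have "i = 1" "j = 2" by auto
  ultimately show "phi1 ks 1 = kx ks 1 + kx ks 2" by simp
  obtain i j where "1 \<le> i" "i < j" "j \<le> length ks + 1" "i + j = 2 * 2 + 1" "phi1 ks 2 = kx ks i
      + kx ks j"
    using phi1_attained[of 2 ks] assms by auto
  moreover from this have "i = 2" "j = 3" using assms by auto
  moreover have "kx ks 3 = 0" using assms by (simp add: kx_def)
  ultimately show "phi1 ks 2 = kx ks 2" by simp
qed

lemma order_gpoch_eq_order_C1a_den:
  assumes "length ks = 2"
  shows "order z (gpoch d (length ks) (phi1 ks)) = order z (C1a_den d ks)"
proof -
  have "order z (gpoch d (length ks) (phi1 ks)) =
      nat_below (- z) (kx ks 1 + kx ks 2) + nat_below (complex_of_real (d / 2) - z) (kx ks 2)"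
    unfolding order_gpoch gpoch_term_def assms using phi1_length_two[OF assms]
        by (simp add: numeral_2_eq_2)
  moreover have "order z (C1a_den d ks) =
      nat_below (- z) (kx ks 1 + kx ks 2) + nat_below (complex_of_real (d / 2) - z) (kx ks 2)"
    unfolding C1a_den_def by (subst order_mult) (auto simp: lpoch_nonzero order_lpoch)
  ultimately show ?thesis by simp
qed

lemma order_C1a_num:
  "order z (C1a_num d d2 ks) = nat_below (- (z + complex_of_real (real (kx ks 1) - (d
      - d2) / 2))) (kx ks 2)"
  unfolding C1a_num_def by (simp add: order_lpoch)

lemma C1a_zeros:
  assumes "length ks = 2"
  shows "(kx ks 2 > 0 \<longrightarrow> rat_zeros (gpoch d (length ks) (phi1 ks) * C1a_num d d2 ks) (C1a_den d ks)
          \<subseteq> complex_of_real ` {(d - d2) / 2 - real (kx ks 1 + kx ks 2) + 1 .. (d - d2) / 2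
              - real (kx ks 1)}) \<and>
      (kx ks 2 = 0 \<longrightarrow> rat_zeros (gpoch d (length ks) (phi1 ks) * C1a_num d d2 ks) (C1a_den d ks)
          = {})"
proof -
  have "gpoch d (length ks) (phi1 ks) * C1a_num d d2 ks \<noteq> 0"
    using gpoch_nonzero unfolding C1a_num_def by (simp add: lpoch_nonzero)
  then have zeros: "rat_zeros (gpoch d (length ks) (phi1 ks) * C1a_num d d2 ks) (C1a_den d ks) =
      {z. nat_below (- (z + complex_of_real (real (kx ks 1) - (d - d2) / 2))) (kx ks 2) \<noteq> 0}"
    unfolding rat_zeros_def by (auto simp: order_mult order_gpoch_eq_order_C1a_den[OF assms]
        order_C1a_num)
  have "z \<in> complex_of_real ` {(d - d2) / 2 - real (kx ks 1 + kx ks 2) + 1 .. (d - d2) / 2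
      - real (kx ks 1)}"
    if nz: "nat_below (- (z + complex_of_real (real (kx ks 1) - (d - d2) / 2))) (kx ks 2) \<noteq> 0" for z
  proof -
    obtain t where t: "t < kx ks 2" "- (z + complex_of_real (real (kx ks 1) - (d - d2) / 2))
        = of_nat t"
      using nat_below_nonzeroD[OF nz] by blast
    then have "z = - complex_of_real (real (kx ks 1) - (d - d2) / 2) - of_nat t"
        by (simp add: algebra_simps)
    then have "z = complex_of_real ((d - d2) / 2 - real (kx ks 1) - real t)" by simp
    moreover have "(d - d2) / 2 - real (kx ks 1) - real t \<in>
        {(d - d2) / 2 - real (kx ks 1 + kx ks 2) + 1 .. (d - d2) / 2 - real (kx ks 1)}"
      using t(1) by auto
    ultimately show ?thesis by blast
  qed
  then show ?thesis unfolding zeros by auto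
qed

lemma C1a_holo_pole:
  assumes d: "d > 0" and "length ks = 2" and m: "1 \<le> m" "m \<le> length ks - 1"
    and phi: "phi1 ks (m + 1) = 0" "phi1 ks m \<noteq> 0"
  shows "rat_holo_nonzero_at (C1a_num d d2 ks) (C1a_den d ks) (complex_of_real (d / 2 * real m)) \<and>
         rat_pole_at (C1a_num d d2 ks) (C1a_den d ks) (complex_of_real (d / 2 * (real m - 1)))"
proof -
  have m1: "m = 1" using m assms(2) by simp
  have k2: "kx ks 2 = 0" using phi(1) m1 phi1_length_two[OF assms(2)] by (simp add: numeral_2_eq_2)
  have k1: "0 < kx ks 1" using phi(2) m1 k2 phi1_length_two[OF assms(2)] by simp
  have num: "order z (C1a_num d d2 ks) = 0" for z using order_C1a_num k2 by simp
  have den: "order z (C1a_den d ks) = nat_below (- z) (kx ks 1)" for z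
    unfolding C1a_den_def using k2 by (subst order_mult) (auto simp: lpoch_nonzero order_lpoch)
  have "nat_below (- complex_of_real (d / 2)) (kx ks 1) = 0"
  proof (rule ccontr)
    assume "nat_below (- complex_of_real (d / 2)) (kx ks 1) \<noteq> 0"
    then have "nat_below (complex_of_real (- d / 2)) (kx ks 1) \<noteq> 0" by simp
    then obtain t where "- d / 2 = real t" using nat_below_of_real_nonzeroD by blast
    then show False using d by simp
  qed
  moreover have "nat_below 0 (kx ks 1) = 1" using nat_below_of_nat[OF k1] by simp
  ultimately show ?thesis unfolding rat_holo_nonzero_at_def rat_pole_at_def num den m1 by simp
qed

text \<open>In case (3) the pair factors \<open>(2\<lambda> - 1 - d(i + j - 1))_(k_i + k_j)\<close> contribute
\<open>C2_shared\<close>, \<open>C2_excess\<close> and the diagonal parts \<open>C2_diag_even\<close>, \<open>C2_diag_odd\<close>; the single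
factors \<open>(\<lambda> - 1/2 - d/2 (2i - 1))_(k_i)\<close> of the numerator and \<open>(\<lambda> - d(i - 1))_(k_i)\<close> of the
denominator contribute \<open>C2_diag_even + C2_single_excess\<close> and \<open>C2_single_den\<close>.\<close>

definition C2_excess :: "real \<Rightarrow> nat list \<Rightarrow> complex \<Rightarrow> nat \<Rightarrow> nat \<Rightarrow> nat" where
  "C2_excess d ks z i j = nat_below (1 + complex_of_real (d*(real (i+j) - 1)) - 2*z
      - of_nat (kx ks i + kx ks (j+1))) (kx ks j - kx ks (j+1))"

definition C2_shared :: "real \<Rightarrow> nat list \<Rightarrow> complex \<Rightarrow> nat" where
  "C2_shared d ks z = (\<Sum>i\<in>{1..length ks}. \<Sum>j\<in>{i+1..length ks}. nat_below (1
      + complex_of_real (d*(real (i+j) - 1)) - 2*z) (kx ks i + kx ks (j+1)))"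

definition kx_half_up :: "nat list \<Rightarrow> nat \<Rightarrow> nat" where
  "kx_half_up ks i = (kx ks i + kx ks (i+1) + 1) div 2"

definition C2_diag_even :: "real \<Rightarrow> nat list \<Rightarrow> complex \<Rightarrow> nat \<Rightarrow> nat" where
  "C2_diag_even d ks z i = nat_below (1/2 + complex_of_real (d/2*(2*real i - 1))
      - z) (kx_half_up ks i)"

definition C2_diag_odd :: "real \<Rightarrow> nat list \<Rightarrow> complex \<Rightarrow> nat \<Rightarrow> nat" where
  "C2_diag_odd d ks z i = nat_below (complex_of_real (d/2*(2*real i - 1)) - z) ((kx ks i
      + kx ks (i+1)) div 2)"

definition C2_single_excess :: "real \<Rightarrow> nat list \<Rightarrow> complex \<Rightarrow> nat \<Rightarrow> nat" where
  "C2_single_excess d ks z i = nat_below (1/2 + complex_of_real (d/2*(2*real i - 1)) - z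
      - of_nat (kx_half_up ks i)) (kx ks i - kx_half_up ks i)"

definition C2_odd_rest :: "real \<Rightarrow> nat list \<Rightarrow> complex \<Rightarrow> nat \<Rightarrow> nat" where
  "C2_odd_rest d ks z i = nat_below (complex_of_real (d/2*(2*real i - 1)) - z
      - of_nat (phi2 ks (2*i))) ((kx ks i + kx ks (i+1)) div 2 - phi2 ks (2*i))"

definition C2_single_rest :: "real \<Rightarrow> nat list \<Rightarrow> complex \<Rightarrow> nat \<Rightarrow> nat" where
  "C2_single_rest d ks z i = nat_below (complex_of_real (d*(real i - 1)) - z
      - of_nat (phi2 ks (2*i-1))) (kx ks i - phi2 ks (2*i-1))"

definition C2_single_den :: "real \<Rightarrow> nat list \<Rightarrow> complex \<Rightarrow> nat \<Rightarrow> nat" where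
  "C2_single_den d ks z i = nat_below (complex_of_real (d*(real i - 1)) - z) (kx ks i)"

lemma order_C2_num:
  assumes s: "sorted_wrt (\<ge>) ks"
  shows "order z (C2_num d ks) = C2_shared d ks z
      + (\<Sum>i\<in>{1..length ks}. \<Sum>j\<in>{i+1..length ks}. C2_excess d ks z i j)
     + (\<Sum>i\<in>{1..length ks}. C2_diag_even d ks z i) + (\<Sum>i\<in>{1..length ks}. C2_single_excess d ks z i)"
proof -
  let ?A = "\<Prod>i\<in>{1..length ks}. \<Prod>j\<in>{i+1..length ks}.
        lpoch 2 (- 1 - complex_of_real (d * (real (i + j) - 1))) (kx ks i + kx ks j)"
  let ?B = "\<Prod>i\<in>{1..length ks}. lpoch 1 (- 1 / 2 - complex_of_real (d / 2 * (2 * real i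
      - 1))) (kx ks i)"
  have nz: "?A * ?B \<noteq> 0" by (auto simp: prod_zero_iff lpoch_nonzero)
  have c: "(2::complex) ^ sum_list ks \<noteq> 0" by simp
  have "order z (C2_num d ks) = order z (?A * ?B)" unfolding C2_num_def by (rule order_smult[OF c])
  also have "\<dots> = order z ?A + order z ?B" by (rule order_mult[OF nz])
  also have "order z ?A = (\<Sum>i\<in>{1..length ks}. \<Sum>j\<in>{i+1..length ks}.
       nat_below (1 + complex_of_real (d*(real (i+j) - 1)) - 2*z) (kx ks i + kx ks j))"
    by (subst order_double_prod) (simp_all add: algebra_simps)
  also have "\<dots> = C2_shared d ks z + (\<Sum>i\<in>{1..length ks}. \<Sum>j\<in>{i+1..length ks}. C2_excess d ks z i j)"
    unfolding C2_shared_def sum.distrib[symmetric]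
  proof (intro sum.cong refl)
    fix i j assume "i \<in> {1..length ks}" "j \<in> {i+1..length ks}"
    then have "kx ks (j+1) \<le> kx ks j" using kx_antimono[OF s, of j "j+1"] by auto
    then have le: "kx ks i + kx ks (j+1) \<le> kx ks i + kx ks j" by simp
    show "nat_below (1 + complex_of_real (d*(real (i+j) - 1)) - 2*z) (kx ks i + kx ks j) =
       nat_below (1 + complex_of_real (d*(real (i+j) - 1)) - 2*z) (kx ks i + kx ks (j+1))
           + C2_excess d ks z i j"
      unfolding C2_excess_def using nat_below_split[OF le] le by simp
  qed
  also have "order z ?B = (\<Sum>i\<in>{1..length ks}. C2_diag_even d ks z i + C2_single_excess d ks z i)"
  proof -
    have "order z ?B =
        (\<Sum>i\<in>{1..length ks}. nat_below (1/2 + complex_of_real (d/2*(2*real i - 1)) - z) (kx ks i))"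
      by (subst order_prod) (auto simp: lpoch_nonzero order_lpoch algebra_simps)
    also have "\<dots> = (\<Sum>i\<in>{1..length ks}. C2_diag_even d ks z i + C2_single_excess d ks z i)"
    proof (intro sum.cong refl)
      fix i assume "i \<in> {1..length ks}"
      then have "kx ks (i+1) \<le> kx ks i" using kx_antimono[OF s, of i "i+1"] by auto
      then have le: "kx_half_up ks i \<le> kx ks i" unfolding kx_half_up_def by simp
      show "nat_below (1/2 + complex_of_real (d/2*(2*real i - 1)) - z) (kx ks i)
          = C2_diag_even d ks z i + C2_single_excess d ks z i"
        unfolding C2_diag_even_def C2_single_excess_def using nat_below_split[OF le] .
    qed
    finally show ?thesis .
  qed
  finally show ?thesis by (simp add: sum.distrib)
qed

lemma order_C2_den:
  assumes s: "sorted_wrt (\<ge>) ks"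
  shows "order z (C2_den d ks) = C2_shared d ks z + (\<Sum>i\<in>{1..length ks}. C2_diag_even d ks z i)
     + (\<Sum>i\<in>{1..length ks}. C2_diag_odd d ks z i) + (\<Sum>i\<in>{1..length ks}. C2_single_den d ks z i)"
proof -
  let ?A = "\<Prod>i\<in>{1..length ks + 1}. \<Prod>j\<in>{i+1..length ks + 1}.
        lpoch 2 (- 1 - complex_of_real (d * (real (i + j) - 2))) (kx ks i + kx ks j)"
  let ?B = "\<Prod>i\<in>{1..length ks}. lpoch 1 (- complex_of_real (d * (real i - 1))) (kx ks i)"
  let ?X = "\<lambda>i j. nat_below (1 + complex_of_real (d*(real (i+j) - 2)) - 2*z) (kx ks i + kx ks j)"
  have nz: "?A * ?B \<noteq> 0" by (auto simp: prod_zero_iff lpoch_nonzero)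
  have "order z (C2_den d ks) = order z ?A + order z ?B"
    unfolding C2_den_def by (rule order_mult[OF nz])
  also have "order z ?A = (\<Sum>i\<in>{1..length ks + 1}. \<Sum>j\<in>{i+1..length ks + 1}. ?X i j)"
    by (subst order_double_prod) (simp_all add: algebra_simps)
  also have "\<dots> = (\<Sum>i\<in>{1..length ks}. \<Sum>j\<in>{Suc i..Suc (length ks)}. ?X i j)"
    by simp
  also have "\<dots> = (\<Sum>i\<in>{1..length ks}. (C2_diag_even d ks z i + C2_diag_odd d ks z i)
      + (\<Sum>j\<in>{Suc i..length ks}. ?X i (Suc j)))"
  proof (intro sum.cong refl)
    fix i assume i: "i \<in> {1..length ks}"
    have "(\<Sum>j\<in>{Suc i..Suc (length ks)}. ?X i j) = ?X i (Suc i)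
        + (\<Sum>j\<in>{Suc (Suc i)..Suc (length ks)}. ?X i j)"
      using i by (intro sum.atLeast_Suc_atMost) auto
    also have "(\<Sum>j\<in>{Suc (Suc i)..Suc (length ks)}. ?X i j) = (\<Sum>j\<in>{Suc i..length ks}. ?X i (Suc j))"
      by (rule sum.shift_bounds_cl_Suc_ivl)
    also have "?X i (Suc i) = C2_diag_even d ks z i + C2_diag_odd d ks z i"
    proof -
      have e1: "(1 + complex_of_real (d*(real (i + Suc i) - 2)) - 2*z) / 2 = 1/2
          + complex_of_real (d/2*(2*real i - 1)) - z"
        by (simp add: field_simps)
      have e2: "(1 + complex_of_real (d*(real (i + Suc i) - 2)) - 2*z - 1) / 2
          = complex_of_real (d/2*(2*real i - 1)) - z"
        by (simp add: field_simps)
      have e3: "(kx ks i + kx ks (Suc i) + 1) div 2 = kx_half_up ks i"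
        unfolding kx_half_up_def by simp
      show ?thesis
        unfolding C2_diag_even_def C2_diag_odd_def nat_below_even_odd[of _ "kx ks i + kx ks (Suc i)"]
        by (simp only: e1 e2 e3) (simp only: Suc_eq_plus1)
    qed
    finally show "(\<Sum>j\<in>{Suc i..Suc (length ks)}. ?X i j) = (C2_diag_even d ks z i
        + C2_diag_odd d ks z i) + (\<Sum>j\<in>{Suc i..length ks}. ?X i (Suc j))" .
  qed
  also have "\<dots> = (\<Sum>i\<in>{1..length ks}. C2_diag_even d ks z i + C2_diag_odd d ks z i)
      + C2_shared d ks z"
  proof -
    have "(\<Sum>i\<in>{1..length ks}. \<Sum>j\<in>{Suc i..length ks}. ?X i (Suc j)) = C2_shared d ks z"
      unfolding C2_shared_def
    proof (intro sum.cong refl)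
      fix i j
      have e: "d*(real (i + Suc j) - 2) = d*(real (i+j) - 1)" by (simp add: field_simps)
      show "?X i (Suc j) = nat_below (1 + complex_of_real (d*(real (i+j) - 1)) - 2*z) (kx ks i
          + kx ks (j+1))"
        by (simp only: e) (simp only: Suc_eq_plus1)
    qed simp
    then show ?thesis by (simp add: sum.distrib)
  qed
  also have "order z ?B = (\<Sum>i\<in>{1..length ks}. C2_single_den d ks z i)"
    unfolding C2_single_den_def
    by (subst order_prod) (auto simp: lpoch_nonzero order_lpoch algebra_simps)
  finally show ?thesis by (simp add: sum.distrib)
qed

lemma C2_diag_odd_split:
  assumes "1 \<le> i" "i \<le> length ks"
  shows "C2_diag_odd d ks z i = gpoch_term d (phi2 ks) z (2 * i) + C2_odd_rest d ks z i"
proof -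
  have le: "phi2 ks (2*i) \<le> (kx ks i + kx ks (i+1)) div 2" by (rule phi2_le) (use assms in auto)
  have e: "d/2*(real (2*i) - 1) = d/2*(2*real i - 1)" by simp
  show ?thesis unfolding C2_diag_odd_def gpoch_term_def C2_odd_rest_def nat_below_split[OF le]
      by (simp only: e)
qed

lemma C2_single_den_split:
  assumes "1 \<le> i" "i \<le> length ks"
  shows "C2_single_den d ks z i = gpoch_term d (phi2 ks) z (2 * i - 1) + C2_single_rest d ks z i"
proof -
  have "phi2 ks (2*i-1) \<le> (kx ks i + kx ks i) div 2" by (rule phi2_le) (use assms in auto)
  then have le: "phi2 ks (2*i-1) \<le> kx ks i" by simp
  have e: "d/2*(real (2*i-1) - 1) = d*(real i - 1)" using assms
      by (simp add: of_nat_diff field_simps)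
  show ?thesis unfolding C2_single_den_def gpoch_term_def C2_single_rest_def nat_below_split[OF
      le] by (simp only: e)
qed

lemma order_C2_balance:
  assumes s: "sorted_wrt (\<ge>) ks"
  shows "order z (gpoch d (2 * length ks) (phi2 ks) * C2_num d ks)
      + (\<Sum>i\<in>{1..length ks}. C2_odd_rest d ks z i) + (\<Sum>i\<in>{1..length ks}. C2_single_rest d ks z i)
       = order z (C2_den d ks) + (\<Sum>i\<in>{1..length ks}. \<Sum>j\<in>{i+1..length ks}. C2_excess d ks z i j)
           + (\<Sum>i\<in>{1..length ks}. C2_single_excess d ks z i)"
proof -
  have nz: "gpoch d (2 * length ks) (phi2 ks) * C2_num d ks \<noteq> 0"
    using gpoch_nonzero unfolding C2_num_def by (auto simp: prod_zero_iff lpoch_nonzero)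
  have g: "order z (gpoch d (2 * length ks) (phi2 ks))
      = (\<Sum>i\<in>{1..length ks}. gpoch_term d (phi2 ks) z (2*i-1) + gpoch_term d (phi2 ks) z (2*i))"
    unfolding order_gpoch gpoch_term_def by (rule sum_atLeastAtMost_pairs)
  have o: "(\<Sum>i\<in>{1..length ks}. C2_diag_odd d ks z i)
      = (\<Sum>i\<in>{1..length ks}. gpoch_term d (phi2 ks) z (2*i))
          + (\<Sum>i\<in>{1..length ks}. C2_odd_rest d ks z i)"
    by (simp add: C2_diag_odd_split sum.distrib[symmetric])
  have q: "(\<Sum>i\<in>{1..length ks}. C2_single_den d ks z i)
      = (\<Sum>i\<in>{1..length ks}. gpoch_term d (phi2 ks) z (2*i-1))
          + (\<Sum>i\<in>{1..length ks}. C2_single_rest d ks z i)"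
    by (simp add: C2_single_den_split sum.distrib[symmetric])
  show ?thesis using order_mult[OF nz] g o q order_C2_num[OF s] order_C2_den[OF s]
      by (simp add: sum.distrib)
qed

lemma C2_excess_nonzeroE:
  assumes "C2_excess d ks z i j \<noteq> 0"
  obtains t where "t < kx ks j - kx ks (j + 1)"
    "z = complex_of_real ((1 + d * (real (i + j) - 1) - real (kx ks i + kx ks (j + 1))
        - real t) / 2)"
proof -
  obtain t where t: "t < kx ks j - kx ks (j + 1)"
    "1 + complex_of_real (d * (real (i + j) - 1)) - 2 * z - of_nat (kx ks i + kx ks (j + 1))
        = of_nat t"
    using nat_below_nonzeroD[OF assms[unfolded C2_excess_def]] by blast
  then have "2 * z = 1 + complex_of_real (d * (real (i + j) - 1)) - of_nat (kx ks i + kx ks (j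
      + 1)) - of_nat t"
    by (simp add: algebra_simps)
  then have "z = (1 + complex_of_real (d * (real (i + j) - 1)) - of_nat (kx ks i + kx ks (j + 1))
      - of_nat t) / 2"
    by (simp add: field_simps)
  then show ?thesis using that t(1) by simp
qed

lemma C2_single_excess_nonzeroE:
  assumes "C2_single_excess d ks z i \<noteq> 0"
  obtains t where "t < kx ks i - kx_half_up ks i"
    "z = complex_of_real (1 / 2 + d / 2 * (2 * real i - 1) - real (kx_half_up ks i) - real t)"
proof -
  obtain t where t: "t < kx ks i - kx_half_up ks i"
    "1 / 2 + complex_of_real (d / 2 * (2 * real i - 1)) - z - of_nat (kx_half_up ks i) = of_nat t"
    using nat_below_nonzeroD[OF assms[unfolded C2_single_excess_def]] by blast
  then have "z = 1 / 2 + complex_of_real (d / 2 * (2 * real i - 1)) - of_nat (kx_half_up ks i)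
      - of_nat t"
    by (simp add: algebra_simps)
  then show ?thesis using that t(1) by simp
qed

lemma kx_half_up_ge: "kx ks i + kx ks (i + 1) \<le> 2 * kx_half_up ks i"
  unfolding kx_half_up_def by simp

lemma C2_zero_rest_less:
  assumes "sorted_wrt (\<ge>) ks"
    and "z \<in> rat_zeros (gpoch d (2 * length ks) (phi2 ks) * C2_num d ks) (C2_den d ks)"
  shows "(\<Sum>i\<in>{1..length ks}. C2_odd_rest d ks z i) + (\<Sum>i\<in>{1..length ks}. C2_single_rest d ks z i) <
         (\<Sum>i\<in>{1..length ks}. \<Sum>j\<in>{i+1..length ks}. C2_excess d ks z i j)
         + (\<Sum>i\<in>{1..length ks}. C2_single_excess d ks z i)"
  using order_C2_balance[OF assms(1), of z d] assms(2) unfolding rat_zeros_def by simp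

text \<open>The excess root \<open>z\<close> of the pair \<open>(i\<^sub>0, j\<^sub>0)\<close> below is a remainder root of the diagonal
factor of index \<open>(i\<^sub>0 + j\<^sub>0)/2\<close> (odd part) or of the single factor of index \<open>(i\<^sub>0 + j\<^sub>0 + 1)/2\<close>.\<close>

lemma C2_rest_root:
  assumes s: "sorted_wrt (\<ge>) ks" and ij: "1 \<le> i0" "i0 < j0" "j0 \<le> length ks"
    and v: "(kx ks i0 + kx ks (j0 + 1)) div 2 \<le> v" "v < kx ks j0"
    and z: "z = complex_of_real (d / 2 * (real (i0 + j0) - 1) - real v)"
  shows "1 \<le> (\<Sum>i\<in>{1..length ks}. C2_odd_rest d ks z i)
      + (\<Sum>i\<in>{1..length ks}. C2_single_rest d ks z i)"
proof (cases "even (i0 + j0)")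
  case True
  then obtain c where c: "i0 + j0 = 2 * c" by blast
  have cr: "1 \<le> c" "c + 1 \<le> j0" "c \<le> length ks" using c ij by auto
  have ph: "phi2 ks (2 * c) \<le> (kx ks i0 + kx ks (j0 + 1)) div 2"
    by (rule phi2_le) (use c ij in auto)
  have "kx ks j0 \<le> (kx ks c + kx ks (c + 1)) div 2"
    using kx_antimono[OF s, of c j0] kx_antimono[OF s, of "c + 1" j0] cr by simp
  then have lt: "v - phi2 ks (2 * c) < (kx ks c + kx ks (c + 1)) div 2 - phi2 ks (2 * c)"
    using v ph by linarith
  have "real (i0 + j0) = 2 * real c" using c by simp
  then have "complex_of_real (d / 2 * (2 * real c - 1)) - z - of_nat (phi2 ks (2 * c)) =
      of_nat (v - phi2 ks (2 * c))"
    using z v(1) ph by (simp add: of_nat_diff)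
  then have "C2_odd_rest d ks z c = 1"
    unfolding C2_odd_rest_def using nat_below_of_nat[OF lt] by simp
  moreover have "C2_odd_rest d ks z c \<le> (\<Sum>i\<in>{1..length ks}. C2_odd_rest d ks z i)"
    by (rule member_le_sum) (use cr in auto)
  ultimately show ?thesis by linarith
next
  case False
  then obtain c where c: "i0 + j0 + 1 = 2 * c" by (metis evenE odd_even_add odd_one)
  have cr: "1 \<le> c" "c \<le> j0" "c \<le> length ks" using c ij by auto
  have ph: "phi2 ks (2 * c - 1) \<le> (kx ks i0 + kx ks (j0 + 1)) div 2"
    by (rule phi2_le) (use c ij in auto)
  have lt: "v - phi2 ks (2 * c - 1) < kx ks c - phi2 ks (2 * c - 1)"
    using v ph kx_antimono[OF s, of c j0] cr by linarith
  have eq: "d / 2 * (real (i0 + j0) - 1) = d * (real c - 1)"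
  proof -
    have r: "real (i0 + j0) = 2 * real c - 1" using c by (simp add: algebra_simps)
    have "d / 2 * (real (i0 + j0) - 1) = d / 2 * ((2 * real c - 1) - 1)" by (simp only: r)
    also have "\<dots> = d * (real c - 1)" by (simp add: field_simps)
    finally show ?thesis .
  qed
  have "z = complex_of_real (d * (real c - 1) - real v)" using z unfolding eq .
  then have "complex_of_real (d * (real c - 1)) - z - of_nat (phi2 ks (2 * c - 1)) =
      of_nat (v - phi2 ks (2 * c - 1))"
    using v(1) ph by (simp add: of_nat_diff)
  then have "C2_single_rest d ks z c = 1"
    unfolding C2_single_rest_def using nat_below_of_nat[OF lt] by simp
  moreover have "C2_single_rest d ks z c \<le> (\<Sum>i\<in>{1..length ks}. C2_single_rest d ks z i)"
    by (rule member_le_sum) (use cr in auto)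
  ultimately show ?thesis by linarith
qed

text \<open>Under these hypotheses at most one excess root sits at a point outside \<open>S\<close>, and
\<open>C2_rest_root\<close> provides a remainder root that cancels it.\<close>

lemma C2_zeros_subset:
  assumes d: "d > 0" and s: "sorted_wrt (\<ge>) ks"
    and excess: "\<And>z i j. 1 \<le> i \<Longrightarrow> i < j \<Longrightarrow> C2_excess d ks z i j \<noteq> 0 \<Longrightarrow> z \<notin> S \<Longrightarrow>
      J j \<and> (kx ks i + kx ks (j + 1)) div 2 \<le> v \<and> v < kx ks j \<and>
      z = complex_of_real (d / 2 * (real (i + j) - 1) - real v)"
    and column: "\<And>j j'. J j \<Longrightarrow> J j' \<Longrightarrow> j = j'"
    and single: "\<And>z i. 1 \<le> i \<Longrightarrow> C2_single_excess d ks z i \<noteq> 0 \<Longrightarrow> z \<in> S"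
  shows "rat_zeros (gpoch d (2 * length ks) (phi2 ks) * C2_num d ks) (C2_den d ks) \<subseteq> S"
proof
  let ?n = "length ks"
  fix z assume zZ: "z \<in> rat_zeros (gpoch d (2 * length ks) (phi2 ks) * C2_num d ks) (C2_den d ks)"
  show "z \<in> S"
  proof (rule ccontr)
    assume out: "z \<notin> S"
    have "C2_single_excess d ks z i = 0" if "i \<in> {1..?n}" for i using single[of i z] out that
        by auto
    then have gt: "(\<Sum>i\<in>{1..?n}. C2_odd_rest d ks z i) + (\<Sum>i\<in>{1..?n}. C2_single_rest d ks z i) <
        (\<Sum>i\<in>{1..?n}. \<Sum>j\<in>{i+1..?n}. C2_excess d ks z i j)" using C2_zero_rest_less[OF s zZ] by simp
    then have "(\<Sum>i\<in>{1..?n}. \<Sum>j\<in>{i+1..?n}. C2_excess d ks z i j) \<noteq> 0" by linarith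
    then obtain i0 j0 where ij0: "i0 \<in> {1..?n}" "j0 \<in> {i0+1..?n}" "C2_excess d ks z i0 j0 \<noteq> 0"
      by (rule double_sum_nonzeroE)
    have p0: "J j0" "(kx ks i0 + kx ks (j0 + 1)) div 2 \<le> v" "v < kx ks j0"
      "z = complex_of_real (d / 2 * (real (i0 + j0) - 1) - real v)"
      using excess[of i0 j0 z] ij0 out by auto
    have "(\<Sum>i\<in>{1..?n}. \<Sum>j\<in>{i+1..?n}. C2_excess d ks z i j) \<le> C2_excess d ks z i0 j0"
    proof (rule double_sum_le_single)
      fix i j assume ij: "i \<in> {1..?n}" "j \<in> {i+1..?n}" "C2_excess d ks z i j \<noteq> 0"
      have p: "J j" "z = complex_of_real (d / 2 * (real (i + j) - 1) - real v)"
        using excess[of i j z] ij out by auto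
      then have j: "j = j0" using column p0(1) by blast
      then have "complex_of_real (d / 2 * (real (i + j0) - 1) - real v) =
          complex_of_real (d / 2 * (real (i0 + j0) - 1) - real v)"
        using p(2) p0(4) j by metis
      then have "d / 2 * (real (i + j0) - 1) - real v = d / 2 * (real (i0 + j0) - 1) - real v"
        by (simp only: of_real_eq_iff)
      then have "i = i0" using d by auto
      then show "i = i0 \<and> j = j0" using j by simp
    qed
    also have "\<dots> \<le> 1" unfolding C2_excess_def by (rule nat_below_le_1)
    moreover have "1 \<le> (\<Sum>i\<in>{1..?n}. C2_odd_rest d ks z i) + (\<Sum>i\<in>{1..?n}. C2_single_rest d ks z i)"
      by (rule C2_rest_root[OF s _ _ _ p0(2,3,4)]) (use ij0 in auto)
    ultimately show False using gt by linarith
  qed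
qed

lemma C2_excess_root_lower:
  assumes d: "d > 0" and s: "sorted_wrt (\<ge>) ks" and km: "kx ks 1 \<le> kx ks m1 + 1"
    and ij: "1 \<le> i" "i < j" and nz: "C2_excess d ks z i j \<noteq> 0"
    and out: "z \<notin> complex_of_real ` {d / 2 * real m1 - real (kx ks 1) + 3 / 2..}"
  shows "(kx ks j = kx ks 1 \<and> kx ks (j + 1) < kx ks 1 \<and> 1 \<le> j) \<and>
    (kx ks i + kx ks (j + 1)) div 2 \<le> kx ks 1 - 1 \<and> kx ks 1 - 1 < kx ks j \<and>
    z = complex_of_real (d / 2 * (real (i + j) - 1) - real (kx ks 1 - 1))"
proof -
  let ?K = "kx ks 1"
  obtain t where t: "t < kx ks j - kx ks (j + 1)"
    and z: "z = complex_of_real ((1 + d * (real (i + j) - 1) - real (kx ks i + kx ks (j + 1))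
        - real t) / 2)"
    using C2_excess_nonzeroE[OF nz] by blast
  have kj: "kx ks j \<le> kx ks i" "kx ks i \<le> ?K"
    using kx_antimono[OF s, of i j] kx_antimono[OF s, of 1 i] ij by auto
  have top: "kx ks j = ?K \<and> t = kx ks j - kx ks (j + 1) - 1"
  proof (rule ccontr)
    assume nt: "\<not> (kx ks j = ?K \<and> t = kx ks j - kx ks (j + 1) - 1)"
    have "m1 \<le> j"
    proof (rule ccontr)
      assume "\<not> m1 \<le> j"
      then have "?K - 1 \<le> kx ks (j + 1)" using kx_antimono[OF s, of "j + 1" m1] km by simp
      then show False using nt t kj by linarith
    qed
    then have "d * real m1 \<le> d * (real (i + j) - 1)" using d ij by (intro mult_left_mono) auto
    moreover have "kx ks i + kx ks (j + 1) + t + 2 \<le> 2 * ?K" using nt t kj by linarith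
    ultimately have "d / 2 * real m1 - real ?K + 3 / 2 \<le>
        (1 + d * (real (i + j) - 1) - real (kx ks i + kx ks (j + 1)) - real t) / 2"
      by (simp add: field_simps)
    then have "z \<in> complex_of_real ` {d / 2 * real m1 - real ?K + 3 / 2..}" unfolding z
        by (intro imageI) simp
    with out show False by contradiction
  qed
  have ki: "kx ks i = ?K" using kj top by simp
  have e: "(1 + d * (real (i + j) - 1) - real (kx ks i + kx ks (j + 1)) - real t) / 2 =
      d / 2 * (real (i + j) - 1) - real (?K - 1)"
    using top ki t by (simp add: of_nat_diff field_simps)
  have "z = complex_of_real (d / 2 * (real (i + j) - 1) - real (?K - 1))" using z unfolding e .
  moreover have "(kx ks i + kx ks (j + 1)) div 2 \<le> ?K - 1" "?K - 1 < kx ks j" "kx ks (j + 1) < ?K"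
    using ki top t by auto
  ultimately show ?thesis using top ij by auto
qed

lemma C2_single_excess_root_lower:
  assumes d: "d > 0" and s: "sorted_wrt (\<ge>) ks" and m1: "1 \<le> m1" and km: "kx ks 1 \<le> kx ks m1 + 1"
    and i: "1 \<le> i" and nz: "C2_single_excess d ks z i \<noteq> 0"
  shows "z \<in> complex_of_real ` {d / 2 * real m1 - real (kx ks 1) + 3 / 2..}"
proof -
  let ?K = "kx ks 1"
  obtain t where t: "t < kx ks i - kx_half_up ks i"
    and z: "z = complex_of_real (1 / 2 + d / 2 * (2 * real i - 1) - real (kx_half_up ks i)
        - real t)"
    using C2_single_excess_nonzeroE[OF nz] by blast
  have ki: "kx ks i \<le> ?K" using kx_antimono[OF s, of 1 i] i by simp
  have "m1 \<le> i"
  proof (rule ccontr)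
    assume "\<not> m1 \<le> i"
    then have "?K - 1 \<le> kx ks (i + 1)" using kx_antimono[OF s, of "i + 1" m1] km by simp
    then show False using t ki kx_half_up_ge[of ks i] by linarith
  qed
  then have "d * real m1 \<le> d * (2 * real i - 1)" using d m1 by (intro mult_left_mono) auto
  moreover have "kx_half_up ks i + t + 1 \<le> ?K" using t ki by linarith
  then have "real (kx_half_up ks i) + real t + 1 \<le> real ?K" by linarith
  ultimately have "d / 2 * real m1 - real ?K + 3 / 2 \<le>
      1 / 2 + d / 2 * (2 * real i - 1) - real (kx_half_up ks i) - real t"
    by (simp add: field_simps)
  then show ?thesis unfolding z by (intro imageI) simp
qed

lemma C2_zeros_lower_bound:
  assumes d: "d > 0" and s: "sorted_wrt (\<ge>) ks" and m1: "1 \<le> m1" and km: "kx ks 1 \<le> kx ks m1 + 1"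
  shows "rat_zeros (gpoch d (2 * length ks) (phi2 ks) * C2_num d ks) (C2_den d ks)
    \<subseteq> complex_of_real ` {d / 2 * real m1 - real (kx ks 1) + 3 / 2..}"
  by (rule C2_zeros_subset[OF d s C2_excess_root_lower[OF d s km] _ C2_single_excess_root_lower[OF
      d s m1 km]])
    (auto intro: kx_drop_unique[OF s])

lemma C2_excess_root_upper_lt:
  assumes d: "d > 0" and s: "sorted_wrt (\<ge>) ks" and m: "m2 < m3"
    and ones: "\<forall>a. m2 + 1 \<le> a \<and> a \<le> m3 \<longrightarrow> kx ks a = 1" and z0: "kx ks (m3 + 1) = 0"
    and ij: "1 \<le> i" "i < j" and nz: "C2_excess d ks z i j \<noteq> 0"
    and out: "z \<notin> complex_of_real ` {..d / 2 * (real (m2 + m3) - 1) - real (kx ks m2) / 2 + 1 / 2}"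
  shows "j = m3 \<and> (kx ks i + kx ks (j + 1)) div 2 \<le> 0 \<and> 0 < kx ks j \<and>
    z = complex_of_real (d / 2 * (real (i + j) - 1) - real (0::nat))"
proof -
  obtain t where t: "t < kx ks j - kx ks (j + 1)"
    and z: "z = complex_of_real ((1 + d * (real (i + j) - 1) - real (kx ks i + kx ks (j + 1))
        - real t) / 2)"
    using C2_excess_nonzeroE[OF nz] by blast
  have "j \<le> m3"
    using t kx_antimono[OF s, of "m3 + 1" j] z0 by (cases "m3 + 1 \<le> j") auto
  then have j: "j \<le> m2 \<or> j = m3" using t ones[rule_format, of j] ones[rule_format, of "j + 1"]
      by fastforce
  show ?thesis
  proof (cases "i \<le> m2")
    case True
    have "d * (real (i + j) - 1) \<le> d * (real (m2 + m3) - 1)" using d j True ij m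
        by (intro mult_left_mono) auto
    moreover have "kx ks m2 \<le> kx ks i" using kx_antimono[OF s, of i m2] True ij by simp
    ultimately have "(1 + d * (real (i + j) - 1) - real (kx ks i + kx ks (j + 1)) - real t) / 2
        \<le> d / 2 * (real (m2 + m3) - 1) - real (kx ks m2) / 2 + 1 / 2" by (simp add: field_simps)
    then have "z \<in> complex_of_real ` {..d / 2 * (real (m2 + m3) - 1) - real (kx ks m2) / 2 + 1 / 2}"
      unfolding z by (intro imageI) simp
    with out show ?thesis by contradiction
  next
    case False
    then have "j = m3" using j ij by auto
    moreover have k: "kx ks i = 1" "kx ks j = 1" "kx ks (j + 1) = 0"
      using ones False ij \<open>j = m3\<close> z0 m by auto
    moreover have "t = 0" using t k by simp
    then have e: "(1 + d * (real (i + j) - 1) - real (kx ks i + kx ks (j + 1)) - real t) / 2 =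
        d / 2 * (real (i + j) - 1) - real (0::nat)"
      using k by (simp add: field_simps)
    ultimately show ?thesis using z[unfolded e] by simp
  qed
qed

lemma C2_single_excess_root_upper_lt:
  assumes d: "d > 0" and s: "sorted_wrt (\<ge>) ks" and m: "m2 < m3"
    and ones: "\<forall>a. m2 + 1 \<le> a \<and> a \<le> m3 \<longrightarrow> kx ks a = 1" and z0: "kx ks (m3 + 1) = 0"
    and i: "1 \<le> i" and nz: "C2_single_excess d ks z i \<noteq> 0"
  shows "z \<in> complex_of_real ` {..d / 2 * (real (m2 + m3) - 1) - real (kx ks m2) / 2 + 1 / 2}"
proof -
  obtain t where t: "t < kx ks i - kx_half_up ks i"
    and z: "z = complex_of_real (1 / 2 + d / 2 * (2 * real i - 1) - real (kx_half_up ks i)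
        - real t)"
    using C2_single_excess_nonzeroE[OF nz] by blast
  have "2 \<le> kx ks i" using t kx_half_up_ge[of ks i] by linarith
  then have "i \<le> m2"
    using ones kx_antimono[OF s, of "m3 + 1" i] z0 by (cases "i \<le> m3"; cases "m2 < i") auto
  then have "d * (2 * real i - 1) \<le> d * (real (m2 + m3) - 1)" using d m
      by (intro mult_left_mono) auto
  moreover have "kx ks m2 \<le> 2 * kx_half_up ks i"
    using kx_antimono[OF s, of i m2] \<open>i \<le> m2\<close> i kx_half_up_ge[of ks i] by simp
  then have "real (kx ks m2) \<le> 2 * real (kx_half_up ks i)" by linarith
  ultimately have "1 / 2 + d / 2 * (2 * real i - 1) - real (kx_half_up ks i) - real t
      \<le> d / 2 * (real (m2 + m3) - 1) - real (kx ks m2) / 2 + 1 / 2"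
    by (simp add: field_simps)
  then show ?thesis unfolding z by (intro imageI) simp
qed

lemma C2_zeros_upper_bound_lt:
  assumes d: "d > 0" and s: "sorted_wrt (\<ge>) ks" and m: "m2 < m3"
    and ones: "\<forall>a. m2 + 1 \<le> a \<and> a \<le> m3 \<longrightarrow> kx ks a = 1" and z0: "kx ks (m3 + 1) = 0"
  shows "rat_zeros (gpoch d (2 * length ks) (phi2 ks) * C2_num d ks) (C2_den d ks)
    \<subseteq> complex_of_real ` {..d / 2 * (real (m2 + m3) - 1) - real (kx ks m2) / 2 + 1 / 2}"
  by (rule C2_zeros_subset[OF d s C2_excess_root_upper_lt[OF d s m ones z0] _
        C2_single_excess_root_upper_lt[OF d s m ones z0]]) simp_all

lemma C2_excess_root_upper_eq:
  assumes d: "d > 0" and s: "sorted_wrt (\<ge>) ks" and z0: "kx ks (M + 1) = 0"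
    and ij: "1 \<le> i" "i < j" and nz: "C2_excess d ks z i j \<noteq> 0"
    and out: "z \<notin> complex_of_real ` {..d / 2 * (2 * real M - 1) - real ((kx ks M + 1) div 2)
        + 1 / 2}"
  shows "j = M \<and> (kx ks i + kx ks (j + 1)) div 2 \<le> kx ks M div 2 \<and> kx ks M div 2 < kx ks j \<and>
    z = complex_of_real (d / 2 * (real (i + j) - 1) - real (kx ks M div 2))"
proof -
  let ?e = "(kx ks M + 1) div 2"
  obtain t where t: "t < kx ks j - kx ks (j + 1)"
    and z: "z = complex_of_real ((1 + d * (real (i + j) - 1) - real (kx ks i + kx ks (j + 1))
        - real t) / 2)"
    using C2_excess_nonzeroE[OF nz] by blast
  have jM: "j \<le> M" using t kx_antimono[OF s, of "M + 1" j] z0 by (cases "M + 1 \<le> j") auto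
  have kM: "kx ks M \<le> kx ks i" using kx_antimono[OF s, of i M] ij jM by simp
  show ?thesis
  proof (cases "2 * ?e \<le> kx ks i + kx ks (j + 1) + t")
    case True
    then have "2 * real ?e \<le> real (kx ks i + kx ks (j + 1)) + real t" by linarith
    moreover have "d * (real (i + j) - 1) \<le> d * (2 * real M - 1)" using d ij jM
        by (intro mult_left_mono) auto
    ultimately have "(1 + d * (real (i + j) - 1) - real (kx ks i + kx ks (j + 1)) - real t) / 2
        \<le> d / 2 * (2 * real M - 1) - real ?e + 1 / 2" by (simp add: field_simps)
    then have "z \<in> complex_of_real ` {..d / 2 * (2 * real M - 1) - real ?e + 1 / 2}"
      unfolding z by (intro imageI) simp
    with out show ?thesis by contradiction
  next
    case False
    have "j = M"
    proof (rule ccontr)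
      assume "j \<noteq> M"
      then have "kx ks M \<le> kx ks (j + 1)" using kx_antimono[OF s, of "j + 1" M] jM by simp
      then show False using False kM by presburger
    qed
    then have v: "kx ks (j + 1) = 0" "kx ks i = kx ks M" "t = 0" "kx ks M = 2 * ?e - 1" "1 \<le> ?e"
      using z0 False kM by auto
    moreover have "kx ks M div 2 = ?e - 1" using v by presburger
    ultimately have e: "(1 + d * (real (i + j) - 1) - real (kx ks i + kx ks (j + 1)) - real t) / 2 =
        d / 2 * (real (i + j) - 1) - real (kx ks M div 2)"
      by (simp add: of_nat_diff field_simps)
    then show ?thesis using z[unfolded e] v \<open>j = M\<close> \<open>kx ks M div 2 = ?e - 1\<close> by simp
  qed
qed

lemma C2_single_excess_root_upper_eq:
  assumes d: "d > 0" and s: "sorted_wrt (\<ge>) ks" and z0: "kx ks (M + 1) = 0"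
    and i: "1 \<le> i" and nz: "C2_single_excess d ks z i \<noteq> 0"
  shows "z \<in> complex_of_real ` {..d / 2 * (2 * real M - 1) - real ((kx ks M + 1) div 2) + 1 / 2}"
proof -
  obtain t where t: "t < kx ks i - kx_half_up ks i"
    and z: "z = complex_of_real (1 / 2 + d / 2 * (2 * real i - 1) - real (kx_half_up ks i)
        - real t)"
    using C2_single_excess_nonzeroE[OF nz] by blast
  have "i \<le> M" using t kx_antimono[OF s, of "M + 1" i] z0 by (cases "M + 1 \<le> i") auto
  then have "d * (2 * real i - 1) \<le> d * (2 * real M - 1)" using d by (intro mult_left_mono) auto
  moreover have "kx ks M \<le> 2 * kx_half_up ks i"
    using kx_antimono[OF s, of i M] \<open>i \<le> M\<close> i kx_half_up_ge[of ks i] by simp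
  then have "real ((kx ks M + 1) div 2) \<le> real (kx_half_up ks i)" by simp
  ultimately have "1 / 2 + d / 2 * (2 * real i - 1) - real (kx_half_up ks i) - real t
      \<le> d / 2 * (2 * real M - 1) - real ((kx ks M + 1) div 2) + 1 / 2"
    by (simp add: field_simps)
  then show ?thesis unfolding z by (intro imageI) simp
qed

lemma C2_zeros_upper_bound_eq:
  assumes d: "d > 0" and s: "sorted_wrt (\<ge>) ks" and z0: "kx ks (M + 1) = 0"
  shows "rat_zeros (gpoch d (2 * length ks) (phi2 ks) * C2_num d ks) (C2_den d ks)
    \<subseteq> complex_of_real ` {..d / 2 * (2 * real M - 1) - real_of_int \<lceil>real (kx ks M) / 2\<rceil> + 1 / 2}"
  unfolding of_real_ceiling_half
  by (rule C2_zeros_subset[OF d s C2_excess_root_upper_eq[OF d s z0] _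
      C2_single_excess_root_upper_eq[OF d s z0]])
    simp_all

lemma C2_zeros_empty:
  assumes d: "d > 0" and s: "sorted_wrt (\<ge>) ks" and k1: "kx ks 1 \<le> 1"
  shows "rat_zeros (gpoch d (2 * length ks) (phi2 ks) * C2_num d ks) (C2_den d ks) = {}"
proof -
  have le1: "kx ks i \<le> 1" if "1 \<le> i" for i using kx_antimono[OF s, of 1 i] that k1 by simp
  have "rat_zeros (gpoch d (2 * length ks) (phi2 ks) * C2_num d ks) (C2_den d ks) \<subseteq> {}"
  proof (rule C2_zeros_subset[OF d s, where J = "\<lambda>j. kx ks j = 1 \<and> kx ks (j + 1) < 1 \<and> 1 \<le> j"
      and v = 0])
    fix z i j assume ij: "1 \<le> i" "i < j" and nz: "C2_excess d ks z i j \<noteq> 0"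
    obtain t where t: "t < kx ks j - kx ks (j + 1)"
      and z: "z = complex_of_real ((1 + d * (real (i + j) - 1) - real (kx ks i + kx ks (j + 1))
          - real t) / 2)"
      using C2_excess_nonzeroE[OF nz] by blast
    have k: "kx ks j = 1" "kx ks (j + 1) = 0" "t = 0" "kx ks i = 1"
      using t le1[of j] le1[of i] kx_antimono[OF s, of i j] ij by auto
    then have e: "(1 + d * (real (i + j) - 1) - real (kx ks i + kx ks (j + 1)) - real t) / 2 =
        d / 2 * (real (i + j) - 1) - real (0::nat)"
      by (simp add: field_simps)
    then show "(kx ks j = 1 \<and> kx ks (j + 1) < 1 \<and> 1 \<le> j) \<and> (kx ks i + kx ks (j + 1)) div 2 \<le> 0 \<and>
        0 < kx ks j \<and> z = complex_of_real (d / 2 * (real (i + j) - 1) - real (0::nat))"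
      using z[unfolded e] k ij by simp
  next
    fix z i assume "1 \<le> i" "C2_single_excess d ks z i \<noteq> 0"
    then show "z \<in> {}"
      using le1[of i] kx_half_up_ge[of ks i] unfolding C2_single_excess_def kx_half_up_def by simp
  qed (auto intro: kx_drop_unique[OF s])
  then show ?thesis by blast
qed

lemma of_real_atLeast_Int_atMost:
  "(of_real ` {a..} :: 'a :: real_algebra_1 set) \<inter> of_real ` {..b} = of_real ` {a..b}"
  by auto

lemma C2_zeros:
  assumes d: "d > 0" and s: "sorted_wrt (\<ge>) ks" and m: "1 \<le> m1" "m2 \<le> m3"
    and km: "kx ks 1 \<le> kx ks m1 + 1"
    and ones: "\<forall>a. m2 + 1 \<le> a \<and> a \<le> m3 \<longrightarrow> kx ks a = 1" and z0: "kx ks (m3 + 1) = 0"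
  shows "(kx ks 1 \<ge> 2 \<and> m2 < m3 \<longrightarrow> rat_zeros (gpoch d (2 * length ks) (phi2 ks) * C2_num d ks)
      (C2_den d ks)
          \<subseteq> complex_of_real ` {d / 2 * real m1 - real (kx ks 1) + 3 / 2 ..
                                  d / 2 * (real (m2 + m3) - 1) - real (kx ks m2) / 2 + 1 / 2}) \<and>
      (kx ks 1 \<ge> 2 \<and> m2 = m3 \<longrightarrow> rat_zeros (gpoch d (2 * length ks) (phi2 ks) * C2_num d ks) (C2_den
          d ks)
          \<subseteq> complex_of_real ` {d / 2 * real m1 - real (kx ks 1) + 3 / 2 ..
                                  d / 2 * (2 * real m3 - 1) - real_of_int \<lceil>real (kx ks m3) / 2\<rceil>
                                      + 1 / 2}) \<and>
      (kx ks 1 \<le> 1 \<longrightarrow> rat_zeros (gpoch d (2 * length ks) (phi2 ks) * C2_num d ks) (C2_den d ks)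
          = {})"
  using C2_zeros_lower_bound[OF d s m(1) km] C2_zeros_upper_bound_lt[OF d s _ ones z0]
    C2_zeros_upper_bound_eq[OF d s z0] C2_zeros_empty[OF d s]
  unfolding of_real_atLeast_Int_atMost[symmetric] by blast

lemma C2_excess_of_real:
  "C2_excess d ks (complex_of_real w) i j =
   nat_below (complex_of_real (1 + d*(real (i+j) - 1) - 2*w - real (kx ks i + kx ks (j+1))))
     (kx ks j - kx ks (j+1))"
proof -
  have "1 + complex_of_real (d*(real (i+j) - 1)) - 2*complex_of_real w - of_nat (kx ks i
      + kx ks (j+1))
      = complex_of_real (1 + d*(real (i+j) - 1) - 2*w - real (kx ks i + kx ks (j+1)))" by simp
  then show ?thesis unfolding C2_excess_def by simp
qed

lemma C2_single_excess_of_real: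
  "C2_single_excess d ks (complex_of_real w) i =
   nat_below (complex_of_real (1/2 + d/2*(2*real i - 1) - w - real (kx_half_up ks i)))
     (kx ks i - kx_half_up ks i)"
proof -
  have "1/2 + complex_of_real (d/2*(2*real i - 1)) - complex_of_real w - of_nat (kx_half_up ks i)
      = complex_of_real (1/2 + d/2*(2*real i - 1) - w - real (kx_half_up ks i))" by simp
  then show ?thesis unfolding C2_single_excess_def by simp
qed

lemma C2_diag_odd_of_real:
  "C2_diag_odd d ks (complex_of_real w) i =
   nat_below (complex_of_real (d/2*(2*real i - 1) - w)) ((kx ks i + kx ks (i+1)) div 2)"
  unfolding C2_diag_odd_def by simp

lemma C2_single_den_of_real:
  "C2_single_den d ks (complex_of_real w) i =
   nat_below (complex_of_real (d*(real i - 1) - w)) (kx ks i)"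
  unfolding C2_single_den_def by simp

locale kx_levels =
  fixes ks :: "nat list" and A B :: nat and d :: real
  assumes s: "sorted_wrt (\<ge>) ks"
    and hA: "\<And>i. 1 \<le> i \<Longrightarrow> (2 \<le> kx ks i \<longleftrightarrow> i \<le> A)"
    and hB: "\<And>i. 1 \<le> i \<Longrightarrow> (1 \<le> kx ks i \<longleftrightarrow> i \<le> B)"
    and Bn: "B \<le> length ks"
    and d: "d > 0"
begin

lemma A_le_B: "A \<le> B"
proof (cases "A = 0")
  case False
  then have "2 \<le> kx ks A" using hA[of A] by simp
  then show ?thesis using hB[of A] False by simp
qed simp

lemma kx_ge_2: "1 \<le> i \<Longrightarrow> i \<le> A \<Longrightarrow> 2 \<le> kx ks i" using hA by blast
lemma kx_eq_1: "A < i \<Longrightarrow> i \<le> B \<Longrightarrow> kx ks i = 1" using hA[of i] hB[of i] by auto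
lemma kx_eq_0: "B < i \<Longrightarrow> kx ks i = 0" using hB[of i] by auto
lemma kx_le_1: "A < i \<Longrightarrow> kx ks i \<le> 1" using hA[of i] by auto

lemma d_mult_mono: "x \<le> y \<Longrightarrow> d * x \<le> d * y" using d by simp

lemma C2_excess_at_AB:
  assumes ij: "1 \<le> i" "i < j"
  shows "C2_excess d ks (complex_of_real (d/2*real (A+B))) i j =
    (if i = A+1 \<and> j = B then 1 else 0)"
proof (cases "i = A+1 \<and> j = B")
  case True
  have k1: "kx ks (A+1) = 1" "kx ks B = 1" "kx ks (B+1) = 0"
      using kx_eq_1[of "A+1"] kx_eq_1[of B] kx_eq_0[of "B+1"] True ij A_le_B by auto
  have e: "1 + d*(real (i+j) - 1) - 2*(d/2*real (A+B)) - real (kx ks i + kx ks (j+1))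
      = real (0::nat)"
    using True k1 by (simp add: field_simps)
  have "C2_excess d ks (complex_of_real (d/2*real (A+B))) i j = 1"
    unfolding C2_excess_of_real by (rule nat_below_of_real[OF e]) (use k1 True in simp)
  then show ?thesis using True by simp
next
  case False
  show ?thesis
  proof (rule ccontr)
    assume "\<not> ?thesis"
    then have "C2_excess d ks (complex_of_real (d/2*real (A+B))) i j \<noteq> 0"
        by (simp only: if_not_P[OF False] not_False_eq_True simp_thms)
    then have "nat_below (complex_of_real (1 + d*(real (i+j) - 1) - 2*(d/2*real (A+B))
        - real (kx ks i + kx ks (j+1)))) (kx ks j - kx ks (j+1)) \<noteq> 0"
      by (simp only: C2_excess_of_real not_False_eq_True)
    then obtain t where t: "t < kx ks j - kx ks (j+1)"
      and y: "1 + d*(real (i+j) - 1) - 2*(d/2*real (A+B)) - real (kx ks i + kx ks (j+1)) = real t"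
      using nat_below_of_real_nonzeroD by blast
    have y': "1 + d*(real i + real j - 1 - real A - real B) - real (kx ks i) - real (kx ks (j+1))
        = real t"
      using y by (simp add: field_simps)
    show False
    proof (cases "j \<le> A")
      case True
      have "2 \<le> kx ks i" using kx_ge_2 ij True by simp
      moreover have "d*(real i + real j - 1 - real A - real B) \<le> d*(-2)"
        using ij True A_le_B by (intro d_mult_mono) linarith
      ultimately show False using y' d by linarith
    next
      case jA: False
      have "kx ks j \<le> 1" using kx_le_1 jA by simp
      then have kj: "kx ks j = 1" "kx ks (j+1) = 0" using t by auto
      then have jB: "j = B" using hB[of j] hB[of "j+1"] ij by auto
      have t0: "t = 0" using t kj by simp
      have ij': "i \<noteq> A+1" using False jB by simp
      show False
      proof (cases "i \<le> A")
        case True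
        have "2 \<le> kx ks i" using kx_ge_2 ij True by simp
        moreover have "d*(real i + real j - 1 - real A - real B) \<le> d*(-1)"
          using True jB by (intro d_mult_mono) linarith
        ultimately show False using y' d kj t0 by linarith
      next
        case iA: False
        then have "A + 2 \<le> i" using ij' by simp
        then have "d*1 \<le> d*(real i + real j - 1 - real A - real B)" using jB
            by (intro d_mult_mono) linarith
        moreover have "kx ks i \<le> 1" using kx_le_1 iA by simp
        ultimately show False using y' d kj t0 by linarith
      qed
    qed
  qed
qed

lemma C2_single_excess_at_AB:
  assumes i: "1 \<le> i"
  shows "C2_single_excess d ks (complex_of_real (d/2*real (A+B))) i = 0"
proof (rule ccontr)
  assume "C2_single_excess d ks (complex_of_real (d/2*real (A+B))) i \<noteq> 0"
  then obtain t where t: "t < kx ks i - kx_half_up ks i"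
    and y: "1/2 + d/2*(2*real i - 1) - d/2*real (A+B) - real (kx_half_up ks i) = real t"
    unfolding C2_single_excess_of_real using nat_below_of_real_nonzeroD by blast
  have c2: "kx ks i + kx ks (i+1) \<le> 2 * kx_half_up ks i" by (rule kx_half_up_ge)
  have "2 \<le> kx ks i" using t c2 by linarith
  then have iA: "i \<le> A" using hA i by simp
  have c1: "1 \<le> kx_half_up ks i" using c2 \<open>2 \<le> kx ks i\<close> by linarith
  have "d*(2*real i - 1 - real A - real B) \<le> d*(-1)" using iA A_le_B by (intro d_mult_mono) linarith
  then show False using y c1 d by (simp add: field_simps)
qed

lemma C2_diag_odd_at_AB:
  assumes i: "1 \<le> i"
  shows "C2_diag_odd d ks (complex_of_real (d/2*real (A+B))) i =
    (if 2*i = A+B+1 \<and> A < i \<and> i+1 \<le> B then 1 else 0)"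
proof (cases "2*i = A+B+1 \<and> A < i \<and> i+1 \<le> B")
  case True
  have k: "kx ks i = 1" "kx ks (i+1) = 1" using kx_eq_1 True by auto
  have e: "d/2*(2*real i - 1) - d/2*real (A+B) = real (0::nat)"
  proof -
    have "2*real i = real (A+B) + 1" using True
        by (metis of_nat_1 of_nat_add of_nat_mult of_nat_numeral)
    then show ?thesis by (simp add: field_simps)
  qed
  have "C2_diag_odd d ks (complex_of_real (d/2*real (A+B))) i = 1"
    unfolding C2_diag_odd_of_real by (rule nat_below_of_real[OF e]) (use k in simp)
  then show ?thesis using True by simp
next
  case False
  show ?thesis
  proof (rule ccontr)
    assume "\<not> ?thesis"
    then have "C2_diag_odd d ks (complex_of_real (d/2*real (A+B))) i \<noteq> 0"
        by (simp only: if_not_P[OF False] not_False_eq_True simp_thms)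
    then have "nat_below (complex_of_real (d/2*(2*real i - 1) - d/2*real (A+B))) ((kx ks i
        + kx ks (i+1)) div 2) \<noteq> 0"
      by (simp only: C2_diag_odd_of_real not_False_eq_True)
    then obtain t where t: "t < (kx ks i + kx ks (i+1)) div 2"
      and y: "d/2*(2*real i - 1) - d/2*real (A+B) = real t" using nat_below_of_real_nonzeroD
          by blast
    have y': "d*(2*real i - 1 - real A - real B) = 2 * real t" using y by (simp add: field_simps)
    have ki1: "kx ks (i+1) \<le> kx ks i" using kx_antimono[OF s, of i "i+1"] i by simp
    have s2: "2 \<le> kx ks i + kx ks (i+1)" using t by linarith
    then have "1 \<le> kx ks i" using ki1 by linarith
    then have iB: "i \<le> B" using hB i by simp
    show False
    proof (cases "i \<le> A")
      case True
      have "d*(2*real i - 1 - real A - real B) \<le> d*(-1)" using True A_le_B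
          by (intro d_mult_mono) linarith
      then show False using y' d by simp
    next
      case iA: False
      have "kx ks i \<le> 1" "kx ks (i+1) \<le> 1" using kx_le_1 iA by auto
      then have k11: "kx ks i = 1" "kx ks (i+1) = 1" "t = 0" using s2 t by auto
      then have "i + 1 \<le> B" using hB[of "i+1"] by simp
      have "d*(2*real i - 1 - real A - real B) = 0" using y' k11 by simp
      then have "2*real i - 1 - real A - real B = 0" using d by simp
      then have "2*i = A+B+1" by linarith
      then show False using False iA \<open>i + 1 \<le> B\<close> by simp
    qed
  qed
qed

lemma C2_single_den_at_AB:
  assumes i: "1 \<le> i"
  shows "C2_single_den d ks (complex_of_real (d/2*real (A+B))) i =
    (if 2*i = A+B+2 \<and> A < i \<and> i \<le> B then 1 else 0)"
proof (cases "2*i = A+B+2 \<and> A < i \<and> i \<le> B")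
  case True
  have k: "kx ks i = 1" using kx_eq_1 True by auto
  have e: "d*(real i - 1) - d/2*real (A+B) = real (0::nat)"
  proof -
    have "2*real i = real (A+B) + 2" using True by (metis of_nat_add of_nat_mult of_nat_numeral)
    then show ?thesis by (simp add: field_simps)
  qed
  have "C2_single_den d ks (complex_of_real (d/2*real (A+B))) i = 1"
    unfolding C2_single_den_of_real by (rule nat_below_of_real[OF e]) (use k in simp)
  then show ?thesis using True by simp
next
  case False
  show ?thesis
  proof (rule ccontr)
    assume "\<not> ?thesis"
    then have "C2_single_den d ks (complex_of_real (d/2*real (A+B))) i \<noteq> 0"
        by (simp only: if_not_P[OF False] not_False_eq_True simp_thms)
    then have "nat_below (complex_of_real (d*(real i - 1) - d/2*real (A+B))) (kx ks i) \<noteq> 0"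
      by (simp only: C2_single_den_of_real not_False_eq_True)
    then obtain t where t: "t < kx ks i"
      and y: "d*(real i - 1) - d/2*real (A+B) = real t" using nat_below_of_real_nonzeroD by blast
    have y': "d*(2*real i - 2 - real A - real B) = 2 * real t" using y by (simp add: field_simps)
    have iB: "i \<le> B" using hB[OF i] t by simp
    show False
    proof (cases "i \<le> A")
      case True
      have "d*(2*real i - 2 - real A - real B) \<le> d*(-1)" using True A_le_B
          by (intro d_mult_mono) linarith
      then show False using y' d by simp
    next
      case iA: False
      have "kx ks i = 1" using kx_eq_1 iA iB by simp
      then have "t = 0" using t by simp
      then have "d*(2*real i - 2 - real A - real B) = 0" using y' by simp
      then have "2*real i - 2 - real A - real B = 0" using d by simp
      then have "2*i = A+B+2" by linarith
      then show False using False iA iB by simp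
    qed
  qed
qed

lemma C2_excess_at_AB_minus_1:
  assumes ij: "1 \<le> i" "i < j"
  shows "C2_excess d ks (complex_of_real (d/2*(real (A+B) - 1))) i j = 0"
proof (rule ccontr)
  assume "C2_excess d ks (complex_of_real (d/2*(real (A+B) - 1))) i j \<noteq> 0"
  then have "nat_below (complex_of_real (1 + d*(real (i+j) - 1) - 2*(d/2*(real (A+B) - 1))
      - real (kx ks i + kx ks (j+1)))) (kx ks j - kx ks (j+1)) \<noteq> 0"
    by (simp only: C2_excess_of_real not_False_eq_True)
  then obtain t where t: "t < kx ks j - kx ks (j+1)"
    and y: "1 + d*(real (i+j) - 1) - 2*(d/2*(real (A+B) - 1)) - real (kx ks i + kx ks (j+1))
        = real t"
    using nat_below_of_real_nonzeroD by blast
  have y': "1 + d*(real i + real j - real A - real B) - real (kx ks i) - real (kx ks (j+1))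
      = real t"
    using y by (simp add: field_simps)
  show False
  proof (cases "j \<le> A")
    case True
    have "2 \<le> kx ks i" using kx_ge_2 ij True by simp
    moreover have "d*(real i + real j - real A - real B) \<le> d*(-1)"
      using ij True A_le_B by (intro d_mult_mono) linarith
    ultimately show False using y' d by linarith
  next
    case jA: False
    have "kx ks j \<le> 1" using kx_le_1 jA by simp
    then have kj: "kx ks j = 1" "kx ks (j+1) = 0" using t by auto
    then have jB: "j = B" using hB[of j] hB[of "j+1"] ij by auto
    have t0: "t = 0" using t kj by simp
    show False
    proof (cases "i \<le> A")
      case True
      have "2 \<le> kx ks i" using kx_ge_2 ij True by simp
      moreover have "d*(real i + real j - real A - real B) \<le> d*0"
        using True jB by (intro d_mult_mono) linarith
      ultimately show False using y' d kj t0 by linarith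
    next
      case iA: False
      have "d*1 \<le> d*(real i + real j - real A - real B)" using jB iA by (intro d_mult_mono) linarith
      moreover have "kx ks i = 1" using kx_eq_1 iA ij jB by simp
      ultimately show False using y' d kj t0 by linarith
    qed
  qed
qed

lemma C2_single_excess_at_AB_minus_1:
  assumes i: "1 \<le> i"
  shows "C2_single_excess d ks (complex_of_real (d/2*(real (A+B) - 1))) i = 0"
proof (rule ccontr)
  assume "C2_single_excess d ks (complex_of_real (d/2*(real (A+B) - 1))) i \<noteq> 0"
  then obtain t where t: "t < kx ks i - kx_half_up ks i"
    and y: "1/2 + d/2*(2*real i - 1) - d/2*(real (A+B) - 1) - real (kx_half_up ks i) = real t"
    unfolding C2_single_excess_of_real using nat_below_of_real_nonzeroD by blast
  have c2: "kx ks i + kx ks (i+1) \<le> 2 * kx_half_up ks i" by (rule kx_half_up_ge)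
  have "2 \<le> kx ks i" using t c2 by linarith
  then have iA: "i \<le> A" using hA i by simp
  have c1: "1 \<le> kx_half_up ks i" using c2 \<open>2 \<le> kx ks i\<close> by linarith
  have "d*(2*real i - real A - real B) \<le> d*0" using iA A_le_B by (intro d_mult_mono) linarith
  then show False using y c1 d by (simp add: field_simps)
qed

lemma phi2_drop_at_AB:
  assumes m: "1 \<le> m" "m \<le> 2 * length ks - 1" and p0: "phi2 ks (m+1) = 0"
    and p1: "phi2 ks m \<noteq> 0"
  shows "m = A + B"
proof (rule antisym)
  have mm: "m + 1 \<le> 2 * length ks" using m by linarith
  obtain i j where ij: "1 \<le> i" "i \<le> j" "j \<le> length ks + 1" "i + j = m + 1 + 1" "phi2 ks (m+1)
      = (kx ks i + kx ks j) div 2"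
    using phi2_attained[of "m+1" ks] mm by auto
  have "kx ks j \<le> kx ks i" using kx_antimono[OF s, of i j] ij by simp
  then have "kx ks j = 0" "kx ks i \<le> 1" using ij p0 by auto
  then have "B < j" "A < i" using hB[of j] hA[of i] ij by auto
  then show "A + B \<le> m" using ij by simp
next
  show "m \<le> A + B"
  proof (rule ccontr)
    assume "\<not> m \<le> A + B"
    then have mg: "A + B + 1 \<le> m" by simp
    define j where "j = min (length ks + 1) (m - A)"
    define i where "i = m + 1 - j"
    have j1: "B + 1 \<le> j" "j \<le> length ks + 1" "j \<le> m - A" using mg Bn unfolding j_def by auto
    have i1: "A + 1 \<le> i" "i + j = m + 1" unfolding i_def using j1 mg by auto
    have ij: "i \<le> j"
    proof (cases "j = m - A")
      case True then show ?thesis using i1 mg A_le_B by simp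
    next
      case False then have "j = length ks + 1" unfolding j_def by auto
      then show ?thesis using i1 m by simp
    qed
    have "phi2 ks m \<le> (kx ks i + kx ks j) div 2" by (rule phi2_le) (use i1 j1 ij m in auto)
    moreover have "kx ks j = 0" using kx_eq_0 j1 by simp
    moreover have "kx ks i \<le> 1" using kx_le_1 i1 by simp
    ultimately show False using p1 by simp
  qed
qed

lemma sum_C2_excess_at_AB:
  "(\<Sum>i\<in>{1..length ks}. \<Sum>j\<in>{i+1..length ks}. C2_excess d ks (complex_of_real (d / 2 * real (A
      + B))) i j) =
   (if A + 1 < B then 1 else 0)"
proof -
  let ?z = "complex_of_real (d / 2 * real (A + B))"
  have "(\<Sum>i\<in>{1..length ks}. \<Sum>j\<in>{i+1..length ks}. C2_excess d ks ?z i j)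
      = (\<Sum>i\<in>{1..length ks}. \<Sum>j\<in>{i+1..length ks}. if i = A+1 \<and> j = B then 1 else 0)"
  proof (intro sum.cong refl)
    fix i j assume "i \<in> {1..length ks}" "j \<in> {i+1..length ks}"
    then show "C2_excess d ks ?z i j = (if i = A+1 \<and> j = B then 1 else 0)"
        by (intro C2_excess_at_AB) auto
  qed
  also have "\<dots> = (\<Sum>i\<in>{1..length ks}. if i = A+1 then (\<Sum>j\<in>{i+1..length ks}. if j
      = B then 1 else 0) else 0)"
    by (intro sum.cong refl) auto
  also have "\<dots> = (if A + 1 < B then 1 else 0)" using Bn by (simp add: sum.delta)
  finally show ?thesis .
qed

lemma sum_C2_den_extra_at_AB:
  "(\<Sum>i\<in>{1..length ks}. C2_diag_odd d ks (complex_of_real (d / 2 * real (A + B))) i)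
   + (\<Sum>i\<in>{1..length ks}. C2_single_den d ks (complex_of_real (d / 2 * real (A + B))) i) =
   (if A + 1 < B then 1 else 0)"
proof -
  let ?z1 = "complex_of_real (d / 2 * real (A + B))"
  let ?n = "length ks"
  define c where "c = (A+B+1) div 2"
  define c' where "c' = (A+B+2) div 2"
  have R1: "(\<Sum>i\<in>{1..?n}. C2_diag_odd d ks ?z1 i) = (if 2*c = A+B+1 \<and> A < c \<and> c+1 \<le> B then 1 else 0)"
  proof -
    have "(\<Sum>i\<in>{1..?n}. C2_diag_odd d ks ?z1 i)
        = (if c \<in> {1..?n} then C2_diag_odd d ks ?z1 c else 0)"
    proof (rule sum_eq_single)
      fix i assume "i \<in> {1..?n}" "C2_diag_odd d ks ?z1 i \<noteq> 0"
      then show "i = c" using C2_diag_odd_at_AB[of i] unfolding c_def by (auto split: if_splits)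
    qed simp
    also have "\<dots> = (if 2*c = A+B+1 \<and> A < c \<and> c+1 \<le> B then 1 else 0)"
      using C2_diag_odd_at_AB[of c] Bn by auto
    finally show ?thesis .
  qed
  have R2: "(\<Sum>i\<in>{1..?n}. C2_single_den d ks ?z1 i) = (if 2*c' = A+B+2 \<and> A < c' \<and> c'
      \<le> B then 1 else 0)"
  proof -
    have "(\<Sum>i\<in>{1..?n}. C2_single_den d ks ?z1 i)
        = (if c' \<in> {1..?n} then C2_single_den d ks ?z1 c' else 0)"
    proof (rule sum_eq_single)
      fix i assume "i \<in> {1..?n}" "C2_single_den d ks ?z1 i \<noteq> 0"
      then show "i = c'" using C2_single_den_at_AB[of i] unfolding c'_def by (auto split: if_splits)
    qed simp
    also have "\<dots> = (if 2*c' = A+B+2 \<and> A < c' \<and> c' \<le> B then 1 else 0)"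
      using C2_single_den_at_AB[of c'] Bn by auto
    finally show ?thesis .
  qed
  have arith: "(if A + 1 < B then 1 else 0) = (if 2*c = A+B+1 \<and> A < c \<and> c+1 \<le> B then 1 else 0)
      + (if 2*c' = A+B+2 \<and> A < c' \<and> c' \<le> B then (1::nat) else 0)"
    using A_le_B unfolding c_def c'_def by presburger
  show ?thesis using R1 R2 arith by simp
qed

lemma C2_holo_at_AB:
  "rat_holo_nonzero_at (C2_num d ks) (C2_den d ks) (complex_of_real (d / 2 * real (A + B)))"
  using sum_C2_excess_at_AB sum_C2_den_extra_at_AB C2_single_excess_at_AB
  unfolding rat_holo_nonzero_at_def order_C2_num[OF s] order_C2_den[OF s] by simp

lemma C2_den_extra_at_AB_minus_1:
  assumes AB1: "1 \<le> A + B"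
  shows "1 \<le> (\<Sum>i\<in>{1..length ks}. C2_diag_odd d ks (complex_of_real (d / 2 * (real (A + B) - 1))) i)
    + (\<Sum>i\<in>{1..length ks}. C2_single_den d ks (complex_of_real (d / 2 * (real (A + B) - 1))) i)"
proof -
  let ?z = "complex_of_real (d / 2 * (real (A + B) - 1))"
  show ?thesis
  proof (cases "A = B")
    case True
    then have A1: "1 \<le> A" using AB1 by simp
    have k: "2 \<le> kx ks A" using kx_ge_2 A1 by simp
    have e: "d/2*(2*real A - 1) - d/2*(real (A+B) - 1) = real (0::nat)" using True by simp
    have "C2_diag_odd d ks ?z A = 1" unfolding C2_diag_odd_of_real
        by (rule nat_below_of_real[OF e]) (use k in simp)
    moreover have "C2_diag_odd d ks ?z A \<le> (\<Sum>i\<in>{1..length ks}. C2_diag_odd d ks ?z i)"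
        by (rule member_le_sum) (use A1 True Bn in auto)
    ultimately show ?thesis by linarith
  next
    case False
    then have AB: "A < B" using A_le_B by simp
    show ?thesis
    proof (cases "even (A+B)")
      case True
      then obtain c where c: "A + B = 2*c" by blast
      have cr: "A < c" "c + 1 \<le> B" "1 \<le> c" using c AB True by presburger+
      have k: "kx ks c = 1" "kx ks (c+1) = 1" using kx_eq_1 cr by auto
      have e: "d/2*(2*real c - 1) - d/2*(real (A+B) - 1) = real (0::nat)"
      proof -
        have "real (A+B) = 2 * real c" using c by simp
        then show ?thesis by simp
      qed
      have "C2_diag_odd d ks ?z c = 1" unfolding C2_diag_odd_of_real
          by (rule nat_below_of_real[OF e]) (use k in simp)
      moreover have "C2_diag_odd d ks ?z c \<le> (\<Sum>i\<in>{1..length ks}. C2_diag_odd d ks ?z i)"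
          by (rule member_le_sum) (use cr Bn in auto)
      ultimately show ?thesis by linarith
    next
      case False
      then obtain c where c: "A + B + 1 = 2*c" by (metis evenE odd_even_add odd_one)
      have cr: "A < c" "c \<le> B" "1 \<le> c" using c AB by presburger+
      have k: "kx ks c = 1" using kx_eq_1 cr by auto
      have e: "d*(real c - 1) - d/2*(real (A+B) - 1) = real (0::nat)"
      proof -
        have "real (A+B) + 1 = 2 * real c" using c
            by (metis of_nat_1 of_nat_add of_nat_mult of_nat_numeral)
        then have r: "real (A+B) = 2 * real c - 1" by simp
        have "d*(real c - 1) - d/2*(real (A+B) - 1) = d*(real c - 1) - d/2*((2 * real c - 1) - 1)"
            by (simp only: r)
        also have "\<dots> = 0" by (simp add: field_simps)
        finally show ?thesis by simp
      qed
      have "C2_single_den d ks ?z c = 1" unfolding C2_single_den_of_real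
          by (rule nat_below_of_real[OF e]) (use k in simp)
      moreover have "C2_single_den d ks ?z c \<le> (\<Sum>i\<in>{1..length ks}. C2_single_den d ks ?z i)"
          by (rule member_le_sum) (use cr Bn in auto)
      ultimately show ?thesis by linarith
    qed
  qed
qed

lemma C2_pole_at_AB_minus_1:
  assumes "1 \<le> A + B"
  shows "rat_pole_at (C2_num d ks) (C2_den d ks) (complex_of_real (d / 2 * (real (A + B) - 1)))"
proof -
  let ?z = "complex_of_real (d / 2 * (real (A + B) - 1))"
  have excess: "(\<Sum>i\<in>{1..length ks}. \<Sum>j\<in>{i+1..length ks}. C2_excess d ks ?z i j) = 0"
    by (intro sum.neutral ballI C2_excess_at_AB_minus_1) auto
  have single: "(\<Sum>i\<in>{1..length ks}. C2_single_excess d ks ?z i) = 0"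
    using C2_single_excess_at_AB_minus_1 by simp
  show ?thesis unfolding rat_pole_at_def order_C2_num[OF s] order_C2_den[OF s] excess single
    using C2_den_extra_at_AB_minus_1[OF assms] by linarith
qed

end

lemma C2_holo_pole:
  assumes d: "d > 0" and s: "sorted_wrt (\<ge>) ks" and m: "1 \<le> m" "m \<le> 2 * length ks - 1"
  and p0: "phi2 ks (m+1) = 0" and p1: "phi2 ks m \<noteq> 0"
  shows "rat_holo_nonzero_at (C2_num d ks) (C2_den d ks) (complex_of_real (d / 2 * real m)) \<and>
      rat_pole_at (C2_num d ks) (C2_den d ks) (complex_of_real (d / 2 * (real m - 1)))"
proof -
  obtain A where A: "A \<le> length ks" "\<And>i. 1 \<le> i \<Longrightarrow> 2 \<le> kx ks i \<longleftrightarrow> i \<le> A"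
    using kx_threshold[OF s, of 2] by auto
  obtain B where B: "B \<le> length ks" "\<And>i. 1 \<le> i \<Longrightarrow> 1 \<le> kx ks i \<longleftrightarrow> i \<le> B"
    using kx_threshold[OF s, of 1] by auto
  interpret kx_levels ks A B d using s A B d by unfold_locales auto
  have "m = A + B" by (rule phi2_drop_at_AB[OF m p0 p1])
  then show ?thesis using C2_holo_at_AB C2_pole_at_AB_minus_1 m by simp
qed

theorem proposition6p5:
  fixes d d2 :: real and ks :: "nat list"
  defines "r2 \<equiv> length ks" and "k \<equiv> kx ks"
  assumes "d > 0" and "d2 > 0" and "r2 \<ge> 1"
    and "sorted_wrt (\<ge>) ks"
  shows
  "(r2 = 2 \<longrightarrow>
      (k 2 > 0 \<longrightarrow> rat_zeros (gpoch d r2 (phi1 ks) * C1a_num d d2 ks) (C1a_den d ks)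
          \<subseteq> complex_of_real ` {(d - d2) / 2 - real (k 1 + k 2) + 1 .. (d - d2) / 2 - real (k 1)}) \<and>
      (k 2 = 0 \<longrightarrow> rat_zeros (gpoch d r2 (phi1 ks) * C1a_num d d2 ks) (C1a_den d ks) = {}))
   \<and>
   (d2 = d / 2 \<longrightarrow> (\<forall>m1 m2. 2 \<le> m1 \<and> m1 \<le> m2 \<and> m2 \<le> r2 \<and>
        (\<forall>a. 2 \<le> a \<and> a \<le> m1 \<longrightarrow> k a = k 2) \<and> k (m2 + 1) = 0 \<longrightarrow>
      (k 1 > k 2 \<and> k 2 > 0 \<longrightarrow> rat_zeros (gpoch d r2 (phi1 ks) * C1b_num d ks) (C1b_den d ks)
          \<subseteq> complex_of_real ` {d / 4 * (real m1 - 1) - real (k 1 + k 2) + 1 ..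
                                  d / 4 * (2 * real m2 - 3) - real (k (m2 - 1))}) \<and>
      (k 1 = k 2 \<and> k 2 > 0 \<longrightarrow> rat_zeros (gpoch d r2 (phi1 ks) * C1b_num d ks) (C1b_den d ks)
          \<subseteq> complex_of_real ` {d / 4 * (2 * real_of_int \<lceil>real m1 / 2\<rceil> - 1) - real (k 1 + k 2) + 1 ..
                                  d / 4 * (2 * real m2 - 3) - real (k (m2 - 1))}) \<and>
      (k 2 = 0 \<longrightarrow> rat_zeros (gpoch d r2 (phi1 ks) * C1b_num d ks) (C1b_den d ks) = {})))
   \<and>
   (\<forall>m1 m2 m3. 1 \<le> m1 \<and> 1 \<le> m2 \<and> 1 \<le> m3 \<and> m1 \<le> r2 \<and> m2 \<le> r2 \<and> m3 \<le> r2 \<and>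
        m1 \<le> m3 \<and> m2 \<le> m3 \<and> k 1 \<le> k m1 + 1 \<and>
        (\<forall>a. m2 + 1 \<le> a \<and> a \<le> m3 \<longrightarrow> k a = 1) \<and> k (m3 + 1) = 0 \<longrightarrow>
      (k 1 \<ge> 2 \<and> m2 < m3 \<longrightarrow> rat_zeros (gpoch d (2 * r2) (phi2 ks) * C2_num d ks) (C2_den d ks)
          \<subseteq> complex_of_real ` {d / 2 * real m1 - real (k 1) + 3 / 2 ..
                                  d / 2 * (real (m2 + m3) - 1) - real (k m2) / 2 + 1 / 2}) \<and>
      (k 1 \<ge> 2 \<and> m2 = m3 \<longrightarrow> rat_zeros (gpoch d (2 * r2) (phi2 ks) * C2_num d ks) (C2_den d ks)
          \<subseteq> complex_of_real ` {d / 2 * real m1 - real (k 1) + 3 / 2 ..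
                                  d / 2 * (2 * real m3 - 1) - real_of_int \<lceil>real (k m3) / 2\<rceil>
                                      + 1 / 2}) \<and>
      (k 1 \<le> 1 \<longrightarrow> rat_zeros (gpoch d (2 * r2) (phi2 ks) * C2_num d ks) (C2_den d ks) = {}))
   \<and>
   (r2 = 2 \<longrightarrow> (\<forall>m. 1 \<le> m \<and> m \<le> r2 - 1 \<and> phi1 ks (m + 1) = 0 \<and> phi1 ks m \<noteq> 0 \<longrightarrow>
      rat_holo_nonzero_at (C1a_num d d2 ks) (C1a_den d ks) (complex_of_real (d / 2 * real m)) \<and>
      rat_pole_at (C1a_num d d2 ks) (C1a_den d ks) (complex_of_real (d / 2 * (real m - 1)))))
   \<and>
   (d2 = d / 2 \<longrightarrow> (\<forall>m. 1 \<le> m \<and> m \<le> r2 - 1 \<and> phi1 ks (m + 1) = 0 \<and> phi1 ks m \<noteq> 0 \<longrightarrow>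
      rat_holo_nonzero_at (C1b_num d ks) (C1b_den d ks) (complex_of_real (d / 2 * real m)) \<and>
      rat_pole_at (C1b_num d ks) (C1b_den d ks) (complex_of_real (d / 2 * (real m - 1)))))
   \<and>
   (\<forall>m. 1 \<le> m \<and> m \<le> 2 * r2 - 1 \<and> phi2 ks (m + 1) = 0 \<and> phi2 ks m \<noteq> 0 \<longrightarrow>
      rat_holo_nonzero_at (C2_num d ks) (C2_den d ks) (complex_of_real (d / 2 * real m)) \<and>
      rat_pole_at (C2_num d ks) (C2_den d ks) (complex_of_real (d / 2 * (real m - 1))))"
proof -
  note d = \<open>d > 0\<close> and s = \<open>sorted_wrt (\<ge>) ks\<close>
  show ?thesis
    unfolding r2_def k_def
    apply (intro conjI)
    subgoal using C1a_zeros by blast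
    subgoal by (intro impI allI; elim conjE; rule C1b_zeros[OF d s]; assumption)
    subgoal by (intro impI allI; elim conjE; rule C2_zeros[OF d s]; assumption)
    subgoal by (intro impI allI; elim conjE; rule C1a_holo_pole[OF d]; assumption)
    subgoal by (intro impI allI; elim conjE; rule C1b_holo_pole[OF d s]; assumption)
    subgoal by (intro impI allI; elim conjE; rule C2_holo_pole[OF d s]; assumption)
    done
qed

end
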